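(* In the setting below, let $\Lambda\subset\operatorname{Char}P$ be a conic Lagrangian submanifold and let $a\in S^{\mu+1}(\Lambda,(\Omega^{1/2}_\Lambda)^3)$ with $p_2a=0$. Then $\mathcal T_{P,H_q}a=\mathcal L_{H_q}a-(H_q\pi)a$ on $\Lambda$.
   Context: $\rho,p:\mathbb R^3\to\mathbb R$, $H:\mathbb R^3\to\mathbb R^3$ are smooth, time-independent, $\rho>0$, $\gamma$ constant, with $\nabla p+H\times\operatorname{curl}H=0$; $c^2=\gamma p/\rho>0$, $0<|H|^2\ne\rho c^2$, and only points with $\xi\cdot H\ne0$, $\xi\times H\ne0$ are considered. $X=\mathbb R_t\times\mathbb R^3_x$ and $P$ is the $3\times3$ operator $P\beta=-\rho\partial_t^2\beta+\gamma\nabla(p\operatorname{div}\beta)+\nabla(\beta\cdot\nabla p)+(\nabla\times(\nabla\times(\beta\times H)))\times H+(\nabla\times H)\times(\nabla\times(\beta\times H))$, with full symbol $p_2+p_1+p_0$ (convention $\partial\mapsto i\xi$, $p_j$ homogeneous of degree $j$), $p_2=(\rho\tau^2-(H\cdot\xi)^2)\operatorname{Id}_3-(\gamma p+|H|^2)\xi\otimes\xi+(H\cdot\xi)(\xi\otimes H+H\otimes\xi)$, and subprincipal symbol $p^s=p_1-\frac1{2i}\sum_j\partial_{x_j}\partial_{\xi_j}p_2$. Let $q_1=\rho\tau^2-(H\cdot\xi)^2$, $q_2=\rho(\tau^2-c_s^2)$, $q_3=\rho(\tau^2-c_f^2)$, $c_{f,s}^2=\tfrac12\big((c^2+h^2)|\xi|^2\pm\sqrt{(c^2-h^2)^2|\xi|^4+4b^2c^2|\xi|^2}\big)$,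 $h^2=|H|^2/\rho$, $b^2=|\xi\times H|^2/\rho$; $\operatorname{Char}P=\{q_1q_2q_3=0\}$. Let $w^2=|H|^2\xi\otimes\xi+|\xi|^2H\otimes H-(H\cdot\xi)(H\otimes\xi+\xi\otimes H)$, $\pi_1=\operatorname{Id}_3+\frac{w^2}{(H\cdot\xi)^2-|H|^2|\xi|^2}$, $\pi_2=\frac{1}{\rho c_s^2-\rho c_f^2}\Big((\gamma p+|H|^2)\xi\otimes\xi-(H\cdot\xi)(\xi\otimes H+H\otimes\xi)+\frac{(H\cdot\xi)^2w^2}{\rho c_s^2-(H\cdot\xi)^2}\Big)$, $\pi_3$ the same with $s$ and $f$ interchanged. With $\Gamma_j$ pairwise disjoint conic neighborhoods of $\{q_j=0\}$, on $\Gamma_j$ set $q=q_j$, $\pi=\pi_j$, $\tilde p_2=\pi_j+\sum_{k\neq j}\frac{q_j}{q_k}\pi_k$. $H_q$ is the Hamilton field of $q$, $H_q\pi$ is $H_q$ applied entrywise to $\pi$, $\{\cdot,\cdot\}$ is the Poisson bracket ($\{\tilde p_2,p_2\}=\sum_j\partial_{\xi_j}\tilde p_2\partial_{x_j}p_2-\partial_{x_j}\tilde p_2\partial_{\xi_j}p_2$, matrix products), $\Omega^{1/2}_\Lambda$ is the half-density bundle of $\Lambda$, $S^{\mu+1}(\Lambda,(\Omega^{1/2}_\Lambda)^3)$ the symbol space of the Lagrangian distributions $I^\mu(X,\Lambda;(\Omega_X^{1/2})^3)$, $\mathcal L_{H_q}$ the Lie derivative along $H_q$, and $\mathcal T_{P,H_q}a=\mathcal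 L_{H_q}a+\frac12\{\tilde p_2,p_2\}a+i\tilde p_2p^sa$. *)

theory Defs
  imports "HOL-Analysis.Analysis"
begin

type_synonym pt = "real \<times> (real^3) \<times> real \<times> (real^3)"
  \<comment> \<open>a point (t, x, tau, xi) of the cotangent bundle of X = R_t x R^3_x\<close>

definition dir_deriv :: "('a::real_normed_vector \<Rightarrow> 'b::real_normed_vector) \<Rightarrow> 'a \<Rightarrow> 'a \<Rightarrow> 'b" where
  "dir_deriv f v z = vector_derivative (\<lambda>s. f (z + s *\<^sub>R v)) (at 0)"

fun iter_dd :: "('a::real_normed_vector) list \<Rightarrow> ('a \<Rightarrow> 'b::real_normed_vector) \<Rightarrow> 'a \<Rightarrow> 'b" where
  "iter_dd [] f = f"
| "iter_dd (v # vs) f = (\<lambda>z. dir_deriv (iter_dd vs f) v z)"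

definition smooth_on :: "('a::euclidean_space) set \<Rightarrow> ('a \<Rightarrow> 'b::real_normed_vector) \<Rightarrow> bool" where
  "smooth_on S f \<longleftrightarrow> (\<forall>vs. set vs \<subseteq> Basis \<longrightarrow> (\<forall>x\<in>S. iter_dd vs f differentiable (at x)))"

definition dT :: "(pt \<Rightarrow> 'b::real_normed_vector) \<Rightarrow> pt \<Rightarrow> 'b" where
  "dT f = dir_deriv f (1, 0, 0, 0)"
definition dX :: "(pt \<Rightarrow> 'b::real_normed_vector) \<Rightarrow> 3 \<Rightarrow> pt \<Rightarrow> 'b" where
  "dX f j = dir_deriv f (0, axis j 1, 0, 0)"
definition dTau :: "(pt \<Rightarrow> 'b::real_normed_vector) \<Rightarrow> pt \<Rightarrow> 'b" where
  "dTau f = dir_deriv f (0, 0, 1, 0)"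
definition dXi :: "(pt \<Rightarrow> 'b::real_normed_vector) \<Rightarrow> 3 \<Rightarrow> pt \<Rightarrow> 'b" where
  "dXi f j = dir_deriv f (0, 0, 0, axis j 1)"

definition poisson :: "(pt \<Rightarrow> real^3^3) \<Rightarrow> (pt \<Rightarrow> real^3^3) \<Rightarrow> pt \<Rightarrow> real^3^3" where
  "poisson A B z = (\<Sum>j\<in>UNIV. dXi A j z ** dX B j z - dX A j z ** dXi B j z)
      + (dTau A z ** dT B z - dT A z ** dTau B z)"

definition hamil :: "(pt \<Rightarrow> real) \<Rightarrow> (pt \<Rightarrow> real^3^3) \<Rightarrow> pt \<Rightarrow> real^3^3" where
  "hamil q A z = (\<Sum>j\<in>UNIV. dXi q j z *\<^sub>R dX A j z - dX q j z *\<^sub>R dXi A j z)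
      + (dTau q z *\<^sub>R dT A z - dT q z *\<^sub>R dTau A z)"

definition symp :: "pt \<Rightarrow> pt \<Rightarrow> real" where
  "symp u v = (case u of (t, x, \<tau>, \<xi>) \<Rightarrow> case v of (t', x', \<tau>', \<xi>') \<Rightarrow>
      \<tau> * t' - t * \<tau>' + \<xi> \<bullet> x' - x \<bullet> \<xi>')"

definition lagrangian_submanifold :: "pt set \<Rightarrow> bool" where
  "lagrangian_submanifold L \<longleftrightarrow>
    (\<forall>z\<in>L. \<exists>U (V :: (real^4) set) \<phi>. open U \<and> z \<in> U \<and> open V \<and> smooth_on V \<phi> \<and>
       inj_on \<phi> V \<and> \<phi> ` V = L \<inter> U \<and> continuous_on (L \<inter> U) (inv_into V \<phi>) \<and>
       (\<forall>u\<in>V. inj (frechet_derivative \<phi> (at u)) \<and>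
          (\<forall>a b. symp (frechet_derivative \<phi> (at u) a) (frechet_derivative \<phi> (at u) b) = 0)))"

definition conic_set :: "pt set \<Rightarrow> bool" where
  "conic_set S \<longleftrightarrow> (\<forall>t x \<tau> \<xi> s. (t, x, \<tau>, \<xi>) \<in> S \<longrightarrow> s > 0 \<longrightarrow> (t, x, s * \<tau>, s *\<^sub>R \<xi>) \<in> S)"

definition cvec :: "real^3 \<Rightarrow> complex^3" where
  "cvec v = (\<chi> i. complex_of_real (v $ i))"
definition cmat :: "real^3^3 \<Rightarrow> complex^3^3" where
  "cmat M = (\<chi> i j. complex_of_real (M $ i $ j))"
definition cscale :: "complex \<Rightarrow> complex^3^3 \<Rightarrow> complex^3^3" where
  "cscale c M = (\<chi> i j. c * M $ i $ j)"
definition tens :: "real^3 \<Rightarrow> real^3 \<Rightarrow> real^3^3" where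
  "tens u v = (\<chi> i j. u $ i * v $ j)"
definition ccross :: "complex^3 \<Rightarrow> complex^3 \<Rightarrow> complex^3" where
  "ccross u v = vector [u$2 * v$3 - u$3 * v$2, u$3 * v$1 - u$1 * v$3, u$1 * v$2 - u$2 * v$1]"
definition cdot :: "complex^3 \<Rightarrow> complex^3 \<Rightarrow> complex" where
  "cdot u v = (\<Sum>i\<in>UNIV. u $ i * v $ i)"

definition pd3 :: "(real^3 \<Rightarrow> 'b::real_normed_vector) \<Rightarrow> 3 \<Rightarrow> real^3 \<Rightarrow> 'b" where
  "pd3 f j = dir_deriv f (axis j 1)"
definition grad3 :: "(real^3 \<Rightarrow> real) \<Rightarrow> real^3 \<Rightarrow> real^3" where
  "grad3 f x = vector [pd3 f 1 x, pd3 f 2 x, pd3 f 3 x]"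
definition curl3 :: "(real^3 \<Rightarrow> real^3) \<Rightarrow> real^3 \<Rightarrow> real^3" where
  "curl3 F x = vector [pd3 F 2 x $ 3 - pd3 F 3 x $ 2, pd3 F 3 x $ 1 - pd3 F 1 x $ 3,
                       pd3 F 1 x $ 2 - pd3 F 2 x $ 1]"

definition dtm :: "(real \<times> (real^3) \<Rightarrow> 'b::real_normed_vector) \<Rightarrow> real \<times> (real^3) \<Rightarrow> 'b" where
  "dtm f = dir_deriv f (1, 0)"
definition dsp :: "(real \<times> (real^3) \<Rightarrow> 'b::real_normed_vector) \<Rightarrow> 3 \<Rightarrow> real \<times> (real^3) \<Rightarrow> 'b" where
  "dsp f j = dir_deriv f (0, axis j 1)"
definition Xgrad :: "(real \<times> (real^3) \<Rightarrow> complex) \<Rightarrow> real \<times> (real^3) \<Rightarrow> complex^3" where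
  "Xgrad g w = vector [dsp g 1 w, dsp g 2 w, dsp g 3 w]"
definition Xdiv :: "(real \<times> (real^3) \<Rightarrow> complex^3) \<Rightarrow> real \<times> (real^3) \<Rightarrow> complex" where
  "Xdiv F w = dsp F 1 w $ 1 + dsp F 2 w $ 2 + dsp F 3 w $ 3"
definition Xcurl :: "(real \<times> (real^3) \<Rightarrow> complex^3) \<Rightarrow> real \<times> (real^3) \<Rightarrow> complex^3" where
  "Xcurl F w = vector [dsp F 2 w $ 3 - dsp F 3 w $ 2, dsp F 3 w $ 1 - dsp F 1 w $ 3,
                       dsp F 1 w $ 2 - dsp F 2 w $ 1]"

definition Pop :: "(real^3 \<Rightarrow> real) \<Rightarrow> (real^3 \<Rightarrow> real) \<Rightarrow> (real^3 \<Rightarrow> real^3) \<Rightarrow> real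
    \<Rightarrow> (real \<times> (real^3) \<Rightarrow> complex^3) \<Rightarrow> real \<times> (real^3) \<Rightarrow> complex^3" where
  "Pop rho pr H gam \<beta> w =
     - (complex_of_real (rho (snd w)) *s dtm (dtm \<beta>) w)
     + complex_of_real gam *s Xgrad (\<lambda>y. complex_of_real (pr (snd y)) * Xdiv \<beta> y) w
     + Xgrad (\<lambda>y. cdot (\<beta> y) (cvec (grad3 pr (snd y)))) w
     + ccross (Xcurl (Xcurl (\<lambda>y. ccross (\<beta> y) (cvec (H (snd y)))))  w) (cvec (H (snd w)))
     + ccross (Xcurl (\<lambda>y. cvec (H (snd y))) w) (Xcurl (\<lambda>y. ccross (\<beta> y) (cvec (H (snd y)))) w)"

text \<open>Full symbol (convention d \<mapsto> i xi): e^{-i(t tau + x.xi)} P(e^{i(t tau + x.xi)} e_k), column k.\<close>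
definition full_symbol :: "(real^3 \<Rightarrow> real) \<Rightarrow> (real^3 \<Rightarrow> real) \<Rightarrow> (real^3 \<Rightarrow> real^3) \<Rightarrow> real
    \<Rightarrow> pt \<Rightarrow> complex^3^3" where
  "full_symbol rho pr H gam z = (case z of (t, x, \<tau>, \<xi>) \<Rightarrow>
     (\<chi> i k. (exp (- \<i> * complex_of_real (t * \<tau> + x \<bullet> \<xi>)) *s
        Pop rho pr H gam (\<lambda>y. exp (\<i> * complex_of_real (fst y * \<tau> + snd y \<bullet> \<xi>)) *s cvec (axis k 1))
            (t, x)) $ i))"

definition p2 :: "(real^3 \<Rightarrow> real) \<Rightarrow> (real^3 \<Rightarrow> real) \<Rightarrow> (real^3 \<Rightarrow> real^3) \<Rightarrow> real \<Rightarrow> pt \<Rightarrow> real^3^3" where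
  "p2 rho pr H gam z = (case z of (t, x, \<tau>, \<xi>) \<Rightarrow>
     (rho x * \<tau>\<^sup>2 - (H x \<bullet> \<xi>)\<^sup>2) *\<^sub>R mat 1 - (gam * pr x + (norm (H x))\<^sup>2) *\<^sub>R tens \<xi> \<xi>
     + (H x \<bullet> \<xi>) *\<^sub>R (tens \<xi> (H x) + tens (H x) \<xi>))"

definition subprincipal :: "(real^3 \<Rightarrow> real) \<Rightarrow> (real^3 \<Rightarrow> real) \<Rightarrow> (real^3 \<Rightarrow> real^3) \<Rightarrow> real
    \<Rightarrow> (pt \<Rightarrow> complex^3^3) \<Rightarrow> pt \<Rightarrow> complex^3^3" where
  "subprincipal rho pr H gam p1 z = p1 z
     - cscale (1 / (2 * \<i>)) (cmat (\<Sum>j\<in>UNIV. dX (\<lambda>w. dXi (p2 rho pr H gam) j w) j z))"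

definition csq :: "(real^3 \<Rightarrow> real) \<Rightarrow> (real^3 \<Rightarrow> real) \<Rightarrow> real \<Rightarrow> real^3 \<Rightarrow> real" where
  "csq rho pr gam x = gam * pr x / rho x"

definition fast_slow :: "bool \<Rightarrow> (real^3 \<Rightarrow> real) \<Rightarrow> (real^3 \<Rightarrow> real) \<Rightarrow> (real^3 \<Rightarrow> real^3) \<Rightarrow> real
    \<Rightarrow> real^3 \<Rightarrow> real^3 \<Rightarrow> real" where
  "fast_slow fast rho pr H gam x \<xi> =
     (let c2 = csq rho pr gam x; h2 = (norm (H x))\<^sup>2 / rho x;
          b2 = (norm (cross3 \<xi> (H x)))\<^sup>2 / rho x; n2 = (norm \<xi>)\<^sup>2;
          s = sqrt ((c2 - h2)\<^sup>2 * n2\<^sup>2 + 4 * b2 * c2 * n2)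
      in (1/2) * ((c2 + h2) * n2 + (if fast then s else - s)))"

abbreviation "cf2 \<equiv> fast_slow True"
abbreviation "cs2 \<equiv> fast_slow False"

definition qq :: "(real^3 \<Rightarrow> real) \<Rightarrow> (real^3 \<Rightarrow> real) \<Rightarrow> (real^3 \<Rightarrow> real^3) \<Rightarrow> real \<Rightarrow> nat \<Rightarrow> pt \<Rightarrow> real" where
  "qq rho pr H gam j z = (case z of (t, x, \<tau>, \<xi>) \<Rightarrow>
     (if j = 1 then rho x * \<tau>\<^sup>2 - (H x \<bullet> \<xi>)\<^sup>2
      else if j = 2 then rho x * (\<tau>\<^sup>2 - cs2 rho pr H gam x \<xi>)
      else rho x * (\<tau>\<^sup>2 - cf2 rho pr H gam x \<xi>)))"

definition CharP :: "(real^3 \<Rightarrow> real) \<Rightarrow> (real^3 \<Rightarrow> real) \<Rightarrow> (real^3 \<Rightarrow> real^3) \<Rightarrow> real \<Rightarrow> pt set" where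
  "CharP rho pr H gam = {z. qq rho pr H gam 1 z * qq rho pr H gam 2 z * qq rho pr H gam 3 z = 0}"

definition w2 :: "(real^3 \<Rightarrow> real^3) \<Rightarrow> real^3 \<Rightarrow> real^3 \<Rightarrow> real^3^3" where
  "w2 H x \<xi> = (norm (H x))\<^sup>2 *\<^sub>R tens \<xi> \<xi> + (norm \<xi>)\<^sup>2 *\<^sub>R tens (H x) (H x)
     - (H x \<bullet> \<xi>) *\<^sub>R (tens (H x) \<xi> + tens \<xi> (H x))"

definition ppi :: "(real^3 \<Rightarrow> real) \<Rightarrow> (real^3 \<Rightarrow> real) \<Rightarrow> (real^3 \<Rightarrow> real^3) \<Rightarrow> real \<Rightarrow> nat \<Rightarrow> pt \<Rightarrow> real^3^3" where
  "ppi rho pr H gam j z = (case z of (t, x, \<tau>, \<xi>) \<Rightarrow>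
     (if j = 1 then mat 1 + (1 / ((H x \<bullet> \<xi>)\<^sup>2 - (norm (H x))\<^sup>2 * (norm \<xi>)\<^sup>2)) *\<^sub>R w2 H x \<xi>
      else let cs = rho x * cs2 rho pr H gam x \<xi>; cf = rho x * cf2 rho pr H gam x \<xi>;
               base = (gam * pr x + (norm (H x))\<^sup>2) *\<^sub>R tens \<xi> \<xi>
                      - (H x \<bullet> \<xi>) *\<^sub>R (tens \<xi> (H x) + tens (H x) \<xi>)
           in if j = 2 then (1 / (cs - cf)) *\<^sub>R (base + ((H x \<bullet> \<xi>)\<^sup>2 / (cs - (H x \<bullet> \<xi>)\<^sup>2)) *\<^sub>R w2 H x \<xi>)
              else (1 / (cf - cs)) *\<^sub>R (base + ((H x \<bullet> \<xi>)\<^sup>2 / (cf - (H x \<bullet> \<xi>)\<^sup>2)) *\<^sub>R w2 H x \<xi>)))"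

definition ptil :: "(real^3 \<Rightarrow> real) \<Rightarrow> (real^3 \<Rightarrow> real) \<Rightarrow> (real^3 \<Rightarrow> real^3) \<Rightarrow> real \<Rightarrow> nat \<Rightarrow> pt \<Rightarrow> real^3^3" where
  "ptil rho pr H gam j z = ppi rho pr H gam j z
     + (\<Sum>k\<in>{1,2,3} - {j}. (qq rho pr H gam j z / qq rho pr H gam k z) *\<^sub>R ppi rho pr H gam k z)"

definition admissible :: "(real^3 \<Rightarrow> real^3) \<Rightarrow> pt \<Rightarrow> bool" where
  "admissible H z = (case z of (t, x, \<tau>, \<xi>) \<Rightarrow> \<xi> \<bullet> H x \<noteq> 0 \<and> cross3 \<xi> (H x) \<noteq> 0)"

text \<open>The transport operator T_{P,H_q} a = L_{H_q} a + 1/2 {tilde p_2, p_2} a + i tilde p_2 p^s a,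
  with the symbols in a trivialisation of the half-density bundle; La is the value of L_{H_q} a.\<close>
definition transportT :: "(real^3 \<Rightarrow> real) \<Rightarrow> (real^3 \<Rightarrow> real) \<Rightarrow> (real^3 \<Rightarrow> real^3) \<Rightarrow> real
    \<Rightarrow> (pt \<Rightarrow> complex^3^3) \<Rightarrow> nat \<Rightarrow> (pt \<Rightarrow> complex^3) \<Rightarrow> (pt \<Rightarrow> complex^3) \<Rightarrow> pt \<Rightarrow> complex^3" where
  "transportT rho pr H gam p1 j La a z =
     La z + cmat ((1/2) *\<^sub>R poisson (ptil rho pr H gam j) (p2 rho pr H gam) z) *v a z
     + \<i> *s ((cmat (ptil rho pr H gam j z) ** subprincipal rho pr H gam p1 z) *v a z)"

end

(*
  At an admissible point the principal symbol p_2 is a real symmetric matrix with the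
  mutually orthogonal eigenvectors xi x H and (H.xi)|xi|^2 H - rho c_{s,f}^2 xi, with eigenvalues
  q_1, q_2, q_3; the pi_k are the corresponding rank-one spectral projectors, so that
  p_2 = q_1 pi_1 + q_2 pi_2 + q_3 pi_3. At points of Lambda in Gamma_j only q_j vanishes, so p_2 a = 0
  forces a = pi_j a.

  The formula then rests on two facts. First, the subprincipal symbol is antisymmetric:
  evaluating P on plane waves shows that p_1 is i times a real matrix whose symmetric part is
  cancelled by the mixed derivatives of p_2, precisely because of the equilibrium condition
  grad p + H x curl H = 0. Since a rank-one symmetric projector sandwiches every
  antisymmetric matrix to zero, tilde p_2 p^s a = pi_j p^s pi_j a = 0. Second, tilde p_2 =
  pi_j + q_j R_j with R_j the inverse of p_2 off the range of pi_j, and differentiating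
  pi_j^2 = pi_j, pi_j^T = pi_j and p_2 pi_j = q_j pi_j yields
  {tilde p_2, p_2} pi_j = -2 (H_q pi_j) pi_j: the leftover term Y is antisymmetric and satisfies
  Y = pi_j Y pi_j, so it vanishes by the same rank-one argument.
*)

theory Submission
  imports Defs
begin

section \<open>Matrix algebra\<close>

lemma matrix_add_rdistrib: "((A::'a::semiring_1^'n^'m) + B) ** C = A ** C + B ** C"
  by (simp add: matrix_matrix_mult_def vec_eq_iff sum.distrib algebra_simps)

lemma matrix_diff_ldistrib: "(C::'a::ring_1^'n^'m) ** (A - B) = C ** A - C ** B"
  by (simp add: matrix_matrix_mult_def vec_eq_iff sum_subtractf algebra_simps)

lemma matrix_diff_rdistrib: "((A::'a::ring_1^'n^'m) - B) ** C = A ** C - B ** C"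
  by (simp add: matrix_matrix_mult_def vec_eq_iff sum_subtractf algebra_simps)

lemma matrix_neg_left: "(- (A::'a::ring_1^'n^'m)) ** B = - (A ** B)"
  by (simp add: matrix_matrix_mult_def vec_eq_iff sum_negf)

lemma matrix_neg_right: "(A::'a::ring_1^'n^'m) ** (- B) = - (A ** B)"
  by (simp add: matrix_matrix_mult_def vec_eq_iff sum_negf)

lemma matrix_scaleR_right: "(A::'a::real_algebra_1^'n^'m) ** (c *\<^sub>R B) = c *\<^sub>R (A ** B)"
  by (simp add: matrix_scalar_ac scalar_matrix_assoc)

lemma matrix_vector_mult_neg: "(- (A::'a::ring_1^'n^'m)) *v v = - (A *v v)"
  by (simp add: matrix_vector_mult_def vec_eq_iff sum_negf)

lemma transpose_add: "transpose ((A::'a::semiring_1^'n^'m) + B) = transpose A + transpose B"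
  by (simp add: transpose_def vec_eq_iff)

lemma transpose_diff: "transpose ((A::'a::ring_1^'n^'m) - B) = transpose A - transpose B"
  by (simp add: transpose_def vec_eq_iff)

lemmas matrix_distribs = matrix_add_ldistrib matrix_add_rdistrib matrix_diff_ldistrib
  matrix_diff_rdistrib matrix_scaleR_right scalar_matrix_assoc[symmetric] matrix_neg_left matrix_neg_right

lemma bounded_bilinear_matrix_mult:
  "bounded_bilinear ((**) :: real^'n^'m \<Rightarrow> real^'p^'n \<Rightarrow> real^'p^'m)"
proof -
  have "bilinear ((**) :: real^'n^'m \<Rightarrow> real^'p^'n \<Rightarrow> real^'p^'m)"
    unfolding bilinear_def
    by (auto intro!: linearI simp: matrix_add_ldistrib matrix_add_rdistrib matrix_scalar_ac scalar_matrix_assoc)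
  then show ?thesis using bilinear_conv_bounded_bilinear by blast
qed

lemma bounded_linear_transpose: "bounded_linear (transpose :: real^'n^'m \<Rightarrow> real^'m^'n)"
proof -
  have "linear (transpose :: real^'n^'m \<Rightarrow> real^'m^'n)"
    by (auto intro!: linearI simp: transpose_add transpose_scalar)
  then show ?thesis using linear_conv_bounded_linear by blast
qed

section \<open>Rank-one tensors\<close>

lemma tens_mult: "tens a b ** tens c d = (b \<bullet> c) *\<^sub>R tens a d"
  by (simp add: tens_def matrix_matrix_mult_def vec_eq_iff inner_vec_def sum_distrib_left sum_distrib_right algebra_simps)

lemma tens_mulv: "tens a b *v v = (b \<bullet> v) *\<^sub>R a"
  by (simp add: tens_def matrix_vector_mult_def vec_eq_iff inner_vec_def sum_distrib_left algebra_simps)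

lemma matrix_mult_tens: "M ** tens a b = tens (M *v a) b"
  by (simp add: tens_def matrix_matrix_mult_def matrix_vector_mult_def vec_eq_iff sum_distrib_left sum_distrib_right mult_ac)

lemma tens_matrix_mult: "tens a b ** M = tens a (transpose M *v b)"
  by (simp add: tens_def matrix_matrix_mult_def matrix_vector_mult_def transpose_def vec_eq_iff sum_3 algebra_simps)

lemma transpose_tens: "transpose (tens a b) = tens b a"
  by (simp add: tens_def transpose_def vec_eq_iff)

lemma tens_add_left: "tens (a + b) c = tens a c + tens b c"
  and tens_add_right: "tens a (b + c) = tens a b + tens a c"
  and tens_diff_left: "tens (a - b) c = tens a c - tens b c"
  and tens_diff_right: "tens a (b - c) = tens a b - tens a c"
  and tens_scale_left: "tens (r *\<^sub>R a) c = r *\<^sub>R tens a c"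
  and tens_scale_right: "tens a (r *\<^sub>R c) = r *\<^sub>R tens a c"
  by (simp_all add: tens_def vec_eq_iff algebra_simps)

lemmas tens_linear = tens_add_left tens_add_right tens_diff_left tens_diff_right tens_scale_left tens_scale_right

lemma tens_zero [simp]: "tens 0 a = 0" "tens a 0 = 0"
  by (simp_all add: tens_def vec_eq_iff)

lemma tens_cross3_self:
  "tens (cross3 a b) (cross3 a b) = (norm (cross3 a b))\<^sup>2 *\<^sub>R mat 1
     - ((norm b)\<^sup>2 *\<^sub>R tens a a + (norm a)\<^sup>2 *\<^sub>R tens b b - (b \<bullet> a) *\<^sub>R (tens b a + tens a b))"
  unfolding power2_norm_eq_inner
  by (simp add: tens_def vec_eq_iff cross3_simps mat_def forall_3 power2_eq_square)

lemma bounded_bilinear_tens: "bounded_bilinear tens"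
proof -
  have "bilinear tens"
    unfolding bilinear_def by (auto intro!: linearI simp: tens_linear)
  then show ?thesis using bilinear_conv_bounded_bilinear by blast
qed

lemma has_derivative_tens [derivative_intros]:
  "(f has_derivative f') (at x within s) \<Longrightarrow> (g has_derivative g') (at x within s) \<Longrightarrow>
   ((\<lambda>x. tens (f x) (g x)) has_derivative (\<lambda>h. tens (f x) (g' h) + tens (f' h) (g x))) (at x within s)"
  by (rule bounded_bilinear.FDERIV[OF bounded_bilinear_tens])

lemma tens_sandwich_antisymmetric:
  assumes "transpose X = - X"
  shows "((c::real) *\<^sub>R tens u u) ** X ** (c *\<^sub>R tens u u) = 0"
proof -
  have "(transpose X *v u) \<bullet> u = u \<bullet> (X *v u)"
    by (simp add: inner_vec_def matrix_vector_mult_def transpose_def sum_3 algebra_simps)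
  moreover have "(transpose X *v u) \<bullet> u = - ((X *v u) \<bullet> u)"
    unfolding assms by (simp add: matrix_vector_mult_neg)
  ultimately have "(transpose X *v u) \<bullet> u = 0" by (simp add: inner_commute)
  have "tens u u ** X ** tens u u = tens u (transpose X *v u) ** tens u u"
    by (simp only: tens_matrix_mult)
  also have "\<dots> = ((transpose X *v u) \<bullet> u) *\<^sub>R tens u u" by (rule tens_mult)
  finally have "tens u u ** X ** tens u u = 0" unfolding \<open>(transpose X *v u) \<bullet> u = 0\<close> by simp
  then show ?thesis by (simp add: matrix_scaleR_right scalar_matrix_assoc[symmetric])
qed

lemma cmat_mult: "cmat (A ** B) = cmat A ** cmat B"
  by (simp add: cmat_def matrix_matrix_mult_def vec_eq_iff)

lemma cmat_diff: "cmat (A - B) = cmat A - cmat B"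
  by (simp add: cmat_def vec_eq_iff)

lemma cmat_neg: "cmat (- A) = - cmat A"
  by (simp add: cmat_def vec_eq_iff)

lemma cmat_scaleR: "cmat (c *\<^sub>R A) = c *\<^sub>R cmat A"
  unfolding cmat_def vec_eq_iff
  by (simp del: scaleR_conv_of_real) (simp add: scaleR_conv_of_real)

lemma cmat_mat1: "cmat (mat 1) = mat 1"
  by (simp add: cmat_def mat_def vec_eq_iff)

lemma cmat_tens_sandwich_antisymmetric:
  fixes C :: "complex^3^3"
  assumes antisym: "\<And>i k. C $ i $ k + C $ k $ i = 0"
  shows "cmat ((c::real) *\<^sub>R tens u u) ** C ** cmat (c *\<^sub>R tens u u) = 0"
proof -
  let ?u = "\<lambda>l. complex_of_real (u $ l)"
  have diag: "C $ i $ i = 0" for i using antisym[of i i] by simp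
  have swap: "C $ k $ i = - C $ i $ k" for i k using antisym[of i k] by (simp add: eq_neg_iff_add_eq_0 add.commute)
  have quadratic_form: "(\<Sum>m\<in>UNIV. \<Sum>l\<in>UNIV. ?u l * C $ l $ m * ?u m) = 0"
    unfolding sum_3 diag swap[of 1 2] swap[of 1 3] swap[of 2 3] by (simp add: algebra_simps)
  have "(cmat (tens u u) ** C ** cmat (tens u u)) $ i $ k =
     ?u i * ?u k * (\<Sum>m\<in>UNIV. \<Sum>l\<in>UNIV. ?u l * C $ l $ m * ?u m)" for i k
    unfolding cmat_def tens_def matrix_matrix_mult_def
    by (simp add: sum_distrib_left sum_distrib_right mult_ac)
  then have "cmat (tens u u) ** C ** cmat (tens u u) = 0"
    unfolding vec_eq_iff quadratic_form by simp
  then show ?thesis unfolding cmat_scaleR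
    by (simp add: matrix_scaleR_right scalar_matrix_assoc[symmetric])
qed

section \<open>Spectral decomposition of the principal symbol\<close>

lemma quadratic_roots_vieta:
  fixes r c2 h2 b2 n2 :: real
  assumes r: "r > 0" and c2: "c2 > 0" and b2: "b2 > 0" and n2: "n2 > 0"
  defines "s \<equiv> sqrt ((c2 - h2)\<^sup>2 * n2\<^sup>2 + 4 * b2 * c2 * n2)"
  defines "cs \<equiv> r * ((1/2) * ((c2 + h2) * n2 + - s))"
  defines "cf \<equiv> r * ((1/2) * ((c2 + h2) * n2 + s))"
  shows "cs + cf = r * (c2 + h2) * n2" "cs * cf = r\<^sup>2 * c2 * n2 * (h2 * n2 - b2)" "cs \<noteq> cf"
proof -
  have D: "(c2 - h2)\<^sup>2 * n2\<^sup>2 + 4 * b2 * c2 * n2 > 0"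
    using assms by (simp add: add_nonneg_pos)
  then have ss: "s\<^sup>2 = (c2 - h2)\<^sup>2 * n2\<^sup>2 + 4 * b2 * c2 * n2" and "s > 0" unfolding s_def by simp_all
  show "cs + cf = r * (c2 + h2) * n2" unfolding cs_def cf_def by (simp add: algebra_simps)
  have "cs * cf = r\<^sup>2 / 4 * (((c2 + h2) * n2)\<^sup>2 - s\<^sup>2)" unfolding cs_def cf_def
    by (simp add: algebra_simps power2_eq_square)
  also have "\<dots> = r\<^sup>2 * c2 * n2 * (h2 * n2 - b2)" unfolding ss by (simp add: algebra_simps power2_eq_square)
  finally show "cs * cf = r\<^sup>2 * c2 * n2 * (h2 * n2 - b2)" .
  show "cs \<noteq> cf" unfolding cs_def cf_def using \<open>s > 0\<close> r by simp
qed

lemma norm_cross3_sq: "(norm (cross3 \<xi> h))\<^sup>2 + (h \<bullet> \<xi>)\<^sup>2 = (norm \<xi>)\<^sup>2 * (norm h)\<^sup>2"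
  using norm_cross_dot[of \<xi> h] by (simp add: inner_commute power_mult_distrib)

lemma slow_fast_vieta:
  assumes r: "rho x > 0" and c: "csq rho pr gam x > 0" and cr: "cross3 \<xi> (H x) \<noteq> 0"
  defines "cs \<equiv> rho x * cs2 rho pr H gam x \<xi>" and "cf \<equiv> rho x * cf2 rho pr H gam x \<xi>"
  shows "cs + cf = (gam * pr x + (norm (H x))\<^sup>2) * (norm \<xi>)\<^sup>2"
    and "cs * cf = gam * pr x * (norm \<xi>)\<^sup>2 * (H x \<bullet> \<xi>)\<^sup>2"
    and "cs \<noteq> cf"
proof -
  have n2: "(norm \<xi>)\<^sup>2 > 0" using cr by auto
  have b2: "(norm (cross3 \<xi> (H x)))\<^sup>2 / rho x > 0" using cr r by simp
  note V = quadratic_roots_vieta[OF r c b2 n2, where ?h2.0 = "(norm (H x))\<^sup>2 / rho x"]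
  have cs: "cs = rho x * ((1/2) * ((csq rho pr gam x + (norm (H x))\<^sup>2 / rho x) * (norm \<xi>)\<^sup>2 + - sqrt ((csq rho pr gam x - (norm (H x))\<^sup>2 / rho x)\<^sup>2 * ((norm \<xi>)\<^sup>2)\<^sup>2 + 4 * ((norm (cross3 \<xi> (H x)))\<^sup>2 / rho x) * csq rho pr gam x * (norm \<xi>)\<^sup>2)))"
    unfolding cs_def fast_slow_def Let_def by simp
  have cf: "cf = rho x * ((1/2) * ((csq rho pr gam x + (norm (H x))\<^sup>2 / rho x) * (norm \<xi>)\<^sup>2 + sqrt ((csq rho pr gam x - (norm (H x))\<^sup>2 / rho x)\<^sup>2 * ((norm \<xi>)\<^sup>2)\<^sup>2 + 4 * ((norm (cross3 \<xi> (H x)))\<^sup>2 / rho x) * csq rho pr gam x * (norm \<xi>)\<^sup>2)))"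
    unfolding cf_def fast_slow_def Let_def by simp
  show "cs + cf = (gam * pr x + (norm (H x))\<^sup>2) * (norm \<xi>)\<^sup>2"
    unfolding cs cf V(1) using r by (simp add: csq_def field_simps)
  show "cs \<noteq> cf" unfolding cs cf using V(3) .
  have "cs * cf = (rho x)\<^sup>2 * csq rho pr gam x * (norm \<xi>)\<^sup>2 * ((norm (H x))\<^sup>2 / rho x * (norm \<xi>)\<^sup>2 - (norm (cross3 \<xi> (H x)))\<^sup>2 / rho x)"
    unfolding cs cf by (rule V(2))
  also have "\<dots> = gam * pr x * (norm \<xi>)\<^sup>2 * ((norm (H x))\<^sup>2 * (norm \<xi>)\<^sup>2 - (norm (cross3 \<xi> (H x)))\<^sup>2)"
    using r by (simp add: csq_def field_simps power2_eq_square)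
  also have "\<dots> = gam * pr x * (norm \<xi>)\<^sup>2 * (H x \<bullet> \<xi>)\<^sup>2"
    using norm_cross3_sq[of \<xi> "H x"] by (metis mult.commute add_diff_cancel_left')
  finally show "cs * cf = gam * pr x * (norm \<xi>)\<^sup>2 * (H x \<bullet> \<xi>)\<^sup>2" .
qed

text \<open>Scalar identities satisfied by a root \<open>c\<close> (and the other root \<open>c'\<close>) of
  \<open>\<lambda>\<^sup>2 - (\<gamma>p + |H|\<^sup>2)|\<xi>|\<^sup>2 \<lambda> + \<gamma>p |\<xi>|\<^sup>2 (H\<cdot>\<xi>)\<^sup>2\<close>, where \<open>bb = |\<xi> \<times> H|\<^sup>2\<close>.\<close>

lemma magnetoacoustic_root_identities:
  fixes gp hh hx n2 bb c c' :: real
  assumes s: "c + c' = (gp + hh) * n2" and p: "c * c' = gp * n2 * hx\<^sup>2"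
    and lag: "bb + hx\<^sup>2 = n2 * hh" and bb: "bb > 0" and n2: "n2 > 0" and hx: "hx \<noteq> 0" and cc: "c \<noteq> c'"
  defines "N \<equiv> n2 * (c - c') * (c - hx\<^sup>2)" and "k \<equiv> hx\<^sup>2 / (c - hx\<^sup>2)"
  shows "(c - hx\<^sup>2) * (c' - hx\<^sup>2) = - hx\<^sup>2 * bb" and "c - hx\<^sup>2 \<noteq> 0" and "N \<noteq> 0"
    and "hx\<^sup>2 * n2\<^sup>2 * hh - 2 * hx\<^sup>2 * n2 * c + c\<^sup>2 * n2 = N"
    and "(gp + hh) * n2 * (hx\<^sup>2 - c) - hx * (hx * n2 * hh - c * hx) = c * (hx\<^sup>2 - c)"
    and "(gp + hh + k * hh) / (c - c') = c\<^sup>2 / N"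
    and "- (hx + k * hx) / (c - c') = - (hx * n2 * c) / N"
    and "k * n2 / (c - c') = (hx * n2)\<^sup>2 / N"
proof -
  have c': "c' = (gp + hh) * n2 - c" using s by simp
  have quad: "c\<^sup>2 - (gp + hh) * n2 * c + gp * hx\<^sup>2 * n2 = 0"
    using p unfolding c' by (simp add: algebra_simps power2_eq_square)
  have "(c - hx\<^sup>2) * (c' - hx\<^sup>2) = c * c' - hx\<^sup>2 * (c + c') + hx\<^sup>2 * hx\<^sup>2" by (simp add: algebra_simps)
  also have "\<dots> = hx\<^sup>2 * (hx\<^sup>2 - n2 * hh)" unfolding p s by (simp add: algebra_simps)
  also have "\<dots> = - hx\<^sup>2 * bb" unfolding lag[symmetric] by (simp add: algebra_simps)
  finally show prod: "(c - hx\<^sup>2) * (c' - hx\<^sup>2) = - hx\<^sup>2 * bb" .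
  show d1: "c - hx\<^sup>2 \<noteq> 0" using prod hx bb by auto
  have d2: "c - c' \<noteq> 0" using cc by simp
  show "N \<noteq> 0" unfolding N_def using n2 d1 d2 by simp
  have "N - (hx\<^sup>2 * n2\<^sup>2 * hh - 2 * hx\<^sup>2 * n2 * c + c\<^sup>2 * n2)
      = n2 * (c\<^sup>2 - (gp + hh) * n2 * c + gp * hx\<^sup>2 * n2)"
    unfolding N_def c' by (simp add: algebra_simps power2_eq_square)
  then show "hx\<^sup>2 * n2\<^sup>2 * hh - 2 * hx\<^sup>2 * n2 * c + c\<^sup>2 * n2 = N" unfolding quad by simp
  have "(gp + hh) * n2 * (hx\<^sup>2 - c) - hx * (hx * n2 * hh - c * hx) - c * (hx\<^sup>2 - c)
      = c\<^sup>2 - (gp + hh) * n2 * c + gp * hx\<^sup>2 * n2"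
    by (simp add: algebra_simps power2_eq_square)
  then show "(gp + hh) * n2 * (hx\<^sup>2 - c) - hx * (hx * n2 * hh - c * hx) = c * (hx\<^sup>2 - c)"
    unfolding quad by simp
  have num: "n2 * ((gp + hh) * (c - hx\<^sup>2) + hx\<^sup>2 * hh) = c\<^sup>2"
    using quad by (simp add: algebra_simps)
  have scale: "y / ((c - hx\<^sup>2) * (c - c')) = (n2 * y) / N" for y
    unfolding N_def using n2 by (simp add: mult_ac)
  have "(gp + hh + k * hh) / (c - c') = ((gp + hh) * (c - hx\<^sup>2) + hx\<^sup>2 * hh) / ((c - hx\<^sup>2) * (c - c'))"
    unfolding k_def using d1 d2 by (simp add: field_simps)
  then show "(gp + hh + k * hh) / (c - c') = c\<^sup>2 / N" unfolding scale num .
  have "- (hx + k * hx) / (c - c') = - (hx * c) / ((c - hx\<^sup>2) * (c - c'))"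
    unfolding k_def using d1 d2 by (simp add: field_simps)
  then show "- (hx + k * hx) / (c - c') = - (hx * n2 * c) / N" unfolding scale by (simp add: mult_ac)
  have "k * n2 / (c - c') = (hx\<^sup>2 * n2) / ((c - hx\<^sup>2) * (c - c'))"
    unfolding k_def using d1 d2 by (simp add: field_simps)
  then show "k * n2 / (c - c') = (hx * n2)\<^sup>2 / N" unfolding scale by (simp add: mult_ac power2_eq_square)
qed

lemma magnetoacoustic_projector:
  fixes \<xi> Hv :: "real^3" and gp c c' r \<tau> :: real
  defines "hx \<equiv> Hv \<bullet> \<xi>" and "n2 \<equiv> (norm \<xi>)\<^sup>2" and "hh \<equiv> (norm Hv)\<^sup>2"
  defines "u \<equiv> (hx * n2) *\<^sub>R Hv - c *\<^sub>R \<xi>"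
  assumes s: "c + c' = (gp + hh) * n2" and p: "c * c' = gp * n2 * hx\<^sup>2"
    and cr: "cross3 \<xi> Hv \<noteq> 0" and hx: "hx \<noteq> 0" and cc: "c \<noteq> c'"
  shows "(1 / (c - c')) *\<^sub>R ((gp + hh) *\<^sub>R tens \<xi> \<xi> - hx *\<^sub>R (tens \<xi> Hv + tens Hv \<xi>)
           + (hx\<^sup>2 / (c - hx\<^sup>2)) *\<^sub>R (hh *\<^sub>R tens \<xi> \<xi> + n2 *\<^sub>R tens Hv Hv - hx *\<^sub>R (tens Hv \<xi> + tens \<xi> Hv)))
         = (1 / (u \<bullet> u)) *\<^sub>R tens u u"
    and "((r * \<tau>\<^sup>2 - hx\<^sup>2) *\<^sub>R mat 1 - (gp + hh) *\<^sub>R tens \<xi> \<xi> + hx *\<^sub>R (tens \<xi> Hv + tens Hv \<xi>)) *v u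
         = (r * \<tau>\<^sup>2 - c) *\<^sub>R u"
    and "u \<bullet> u \<noteq> 0"
proof -
  have n2: "n2 > 0" using cr unfolding n2_def by auto
  have bb: "(norm (cross3 \<xi> Hv))\<^sup>2 > 0" using cr by simp
  have lag: "(norm (cross3 \<xi> Hv))\<^sup>2 + hx\<^sup>2 = n2 * hh"
    unfolding hx_def n2_def hh_def by (rule norm_cross3_sq)
  note E = magnetoacoustic_root_identities[OF s p lag bb n2 hx cc]
  have "u \<bullet> u = hx\<^sup>2 * n2\<^sup>2 * hh - 2 * hx\<^sup>2 * n2 * c + c\<^sup>2 * n2"
    unfolding u_def hh_def n2_def hx_def power2_norm_eq_inner
    by (simp add: inner_diff_left inner_diff_right inner_commute algebra_simps power2_eq_square)
  then have uu: "u \<bullet> u = n2 * (c - c') * (c - hx\<^sup>2)" using E(4) by simp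
  then show "u \<bullet> u \<noteq> 0" using E(3) by simp
  have tu: "tens u u = c\<^sup>2 *\<^sub>R tens \<xi> \<xi> + (- (hx * n2 * c)) *\<^sub>R (tens \<xi> Hv + tens Hv \<xi>) + (hx * n2)\<^sup>2 *\<^sub>R tens Hv Hv"
    unfolding u_def by (simp add: tens_linear algebra_simps power2_eq_square)
  define k where "k = hx\<^sup>2 / (c - hx\<^sup>2)"
  have "(1 / (c - c')) *\<^sub>R ((gp + hh) *\<^sub>R tens \<xi> \<xi> - hx *\<^sub>R (tens \<xi> Hv + tens Hv \<xi>)
           + k *\<^sub>R (hh *\<^sub>R tens \<xi> \<xi> + n2 *\<^sub>R tens Hv Hv - hx *\<^sub>R (tens Hv \<xi> + tens \<xi> Hv)))
      = ((gp + hh + k * hh) / (c - c')) *\<^sub>R tens \<xi> \<xi> + (- (hx + k * hx) / (c - c')) *\<^sub>R (tens \<xi> Hv + tens Hv \<xi>)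
        + (k * n2 / (c - c')) *\<^sub>R tens Hv Hv"
    by (simp add: algebra_simps divide_inverse scaleR_add_left)
  then show "(1 / (c - c')) *\<^sub>R ((gp + hh) *\<^sub>R tens \<xi> \<xi> - hx *\<^sub>R (tens \<xi> Hv + tens Hv \<xi>)
           + (hx\<^sup>2 / (c - hx\<^sup>2)) *\<^sub>R (hh *\<^sub>R tens \<xi> \<xi> + n2 *\<^sub>R tens Hv Hv - hx *\<^sub>R (tens Hv \<xi> + tens \<xi> Hv)))
         = (1 / (u \<bullet> u)) *\<^sub>R tens u u"
    unfolding k_def E(6-8)[folded uu] tu by (simp add: algebra_simps divide_inverse)
  have xu: "\<xi> \<bullet> u = n2 * (hx\<^sup>2 - c)"
    unfolding u_def hx_def n2_def power2_norm_eq_inner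
    by (simp add: inner_diff_right inner_commute algebra_simps power2_eq_square)
  have hu: "Hv \<bullet> u = hx * n2 * hh - c * hx"
    unfolding u_def hx_def hh_def power2_norm_eq_inner
    by (simp add: inner_diff_right inner_commute algebra_simps power2_eq_square)
  have "((r * \<tau>\<^sup>2 - hx\<^sup>2) *\<^sub>R mat 1 - (gp + hh) *\<^sub>R tens \<xi> \<xi> + hx *\<^sub>R (tens \<xi> Hv + tens Hv \<xi>)) *v u
     = (r * \<tau>\<^sup>2 - hx\<^sup>2) *\<^sub>R u - ((gp + hh) * n2 * (hx\<^sup>2 - c) - hx * (hx * n2 * hh - c * hx)) *\<^sub>R \<xi>
        + (hx * (n2 * (hx\<^sup>2 - c))) *\<^sub>R Hv"
    by (simp add: matrix_vector_mult_add_rdistrib matrix_vector_mult_diff_rdistrib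
        scaleR_matrix_vector_assoc[symmetric] tens_mulv xu hu algebra_simps)
  also have "\<dots> = (r * \<tau>\<^sup>2 - c) *\<^sub>R u"
    unfolding E(5) u_def by (simp add: algebra_simps)
  finally show "((r * \<tau>\<^sup>2 - hx\<^sup>2) *\<^sub>R mat 1 - (gp + hh) *\<^sub>R tens \<xi> \<xi> + hx *\<^sub>R (tens \<xi> Hv + tens Hv \<xi>)) *v u
         = (r * \<tau>\<^sup>2 - c) *\<^sub>R u" .
qed

definition nondegenerate :: "(real^3 \<Rightarrow> real) \<Rightarrow> (real^3 \<Rightarrow> real) \<Rightarrow> (real^3 \<Rightarrow> real^3) \<Rightarrow> real \<Rightarrow> pt \<Rightarrow> bool" where
  "nondegenerate rho pr H gam z = (case z of (t, x, \<tau>, \<xi>) \<Rightarrow>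
     rho x > 0 \<and> csq rho pr gam x > 0 \<and> \<xi> \<bullet> H x \<noteq> 0 \<and> cross3 \<xi> (H x) \<noteq> 0)"

lemma nondegenerateI:
  "\<forall>x. rho x > 0 \<Longrightarrow> \<forall>x. csq rho pr gam x > 0 \<Longrightarrow> admissible H z \<Longrightarrow> nondegenerate rho pr H gam z"
  by (auto simp: nondegenerate_def admissible_def split: prod.splits)

text \<open>Eigenvectors of \<open>p\<^sub>2\<close>: \<open>\<xi> \<times> H\<close> (Alfven wave, index 1) and
  \<open>(H\<cdot>\<xi>)|\<xi>|\<^sup>2 H - \<rho>c\<^sub>s\<^sub>,\<^sub>f\<^sup>2 \<xi>\<close> (slow and fast magnetoacoustic waves, indices 2 and 3).\<close>

definition eigvec :: "(real^3 \<Rightarrow> real) \<Rightarrow> (real^3 \<Rightarrow> real) \<Rightarrow> (real^3 \<Rightarrow> real^3) \<Rightarrow> real \<Rightarrow> nat \<Rightarrow> pt \<Rightarrow> real^3" where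
  "eigvec rho pr H gam k z = (case z of (t, x, \<tau>, \<xi>) \<Rightarrow>
     (if k = 1 then cross3 \<xi> (H x)
      else ((H x \<bullet> \<xi>) * (norm \<xi>)\<^sup>2) *\<^sub>R H x - (rho x * fast_slow (k \<noteq> 2) rho pr H gam x \<xi>) *\<^sub>R \<xi>))"

lemma p2_eq:
  "p2 rho pr H gam (t, x, \<tau>, \<xi>) = (rho x * \<tau>\<^sup>2 - (H x \<bullet> \<xi>)\<^sup>2) *\<^sub>R mat 1
     - (gam * pr x + (norm (H x))\<^sup>2) *\<^sub>R tens \<xi> \<xi> + (H x \<bullet> \<xi>) *\<^sub>R (tens \<xi> (H x) + tens (H x) \<xi>)"
  unfolding p2_def by simp

lemma ppi_alfven:
  assumes "nondegenerate rho pr H gam z"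
  defines "u \<equiv> eigvec rho pr H gam 1 z"
  shows "ppi rho pr H gam 1 z = (1 / (u \<bullet> u)) *\<^sub>R tens u u" and "u \<bullet> u \<noteq> 0"
    and "p2 rho pr H gam z *v u = qq rho pr H gam 1 z *\<^sub>R u"
proof -
  obtain t x \<tau> \<xi> where z: "z = (t, x, \<tau>, \<xi>)" by (cases z) auto
  have cr: "cross3 \<xi> (H x) \<noteq> 0" using assms(1) unfolding nondegenerate_def z by auto
  have U: "u = cross3 \<xi> (H x)" unfolding u_def eigvec_def z by simp
  have uu: "u \<bullet> u = (norm (cross3 \<xi> (H x)))\<^sup>2" unfolding U by (simp add: power2_norm_eq_inner)
  then show "u \<bullet> u \<noteq> 0" using cr by simp
  have L: "(H x \<bullet> \<xi>)\<^sup>2 - (norm (H x))\<^sup>2 * (norm \<xi>)\<^sup>2 = - (norm (cross3 \<xi> (H x)))\<^sup>2"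
    using norm_cross3_sq[of \<xi> "H x"] by (simp add: algebra_simps)
  have T: "tens u u = (norm (cross3 \<xi> (H x)))\<^sup>2 *\<^sub>R mat 1 - w2 H x \<xi>"
    unfolding U tens_cross3_self w2_def by (simp add: inner_commute algebra_simps)
  have P: "ppi rho pr H gam 1 z = mat 1 + (1 / ((H x \<bullet> \<xi>)\<^sup>2 - (norm (H x))\<^sup>2 * (norm \<xi>)\<^sup>2)) *\<^sub>R w2 H x \<xi>"
    unfolding ppi_def z by simp
  show "ppi rho pr H gam 1 z = (1 / (u \<bullet> u)) *\<^sub>R tens u u"
    unfolding P L T uu using cr by (simp add: algebra_simps)
  have "\<xi> \<bullet> u = 0" "H x \<bullet> u = 0" unfolding U by (simp_all add: dot_cross_self)
  then show "p2 rho pr H gam z *v u = qq rho pr H gam 1 z *\<^sub>R u"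
    unfolding z p2_eq by (simp add: qq_def matrix_vector_mult_add_rdistrib matrix_vector_mult_diff_rdistrib
        scaleR_matrix_vector_assoc[symmetric] tens_mulv)
qed

lemma ppi_magnetoacoustic:
  assumes "nondegenerate rho pr H gam z" and k: "k \<in> {2, 3}"
  defines "u \<equiv> eigvec rho pr H gam k z"
  shows "ppi rho pr H gam k z = (1 / (u \<bullet> u)) *\<^sub>R tens u u" and "u \<bullet> u \<noteq> 0"
    and "p2 rho pr H gam z *v u = qq rho pr H gam k z *\<^sub>R u"
proof -
  obtain t x \<tau> \<xi> where z: "z = (t, x, \<tau>, \<xi>)" by (cases z) auto
  have r: "rho x > 0" and c: "csq rho pr gam x > 0" and "\<xi> \<bullet> H x \<noteq> 0" and cr: "cross3 \<xi> (H x) \<noteq> 0"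
    using assms(1) unfolding nondegenerate_def z by auto
  then have hx: "H x \<bullet> \<xi> \<noteq> 0" by (simp add: inner_commute)
  define c where "c = rho x * fast_slow (k = 3) rho pr H gam x \<xi>"
  define c' where "c' = rho x * fast_slow (k = 2) rho pr H gam x \<xi>"
  note V = slow_fast_vieta[where rho = rho and x = x and H = H and \<xi> = \<xi>, OF r c cr]
  have s: "c + c' = (gam * pr x + (norm (H x))\<^sup>2) * (norm \<xi>)\<^sup>2"
    and p: "c * c' = gam * pr x * (norm \<xi>)\<^sup>2 * (H x \<bullet> \<xi>)\<^sup>2" and cc: "c \<noteq> c'"
    using k V unfolding c_def c'_def by (auto simp: algebra_simps)
  have U: "u = ((H x \<bullet> \<xi>) * (norm \<xi>)\<^sup>2) *\<^sub>R H x - c *\<^sub>R \<xi>"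
    using k unfolding u_def eigvec_def z c_def by auto
  have P: "ppi rho pr H gam k z = (1 / (c - c')) *\<^sub>R ((gam * pr x + (norm (H x))\<^sup>2) *\<^sub>R tens \<xi> \<xi>
           - (H x \<bullet> \<xi>) *\<^sub>R (tens \<xi> (H x) + tens (H x) \<xi>)
           + ((H x \<bullet> \<xi>)\<^sup>2 / (c - (H x \<bullet> \<xi>)\<^sup>2)) *\<^sub>R ((norm (H x))\<^sup>2 *\<^sub>R tens \<xi> \<xi> + (norm \<xi>)\<^sup>2 *\<^sub>R tens (H x) (H x)
              - (H x \<bullet> \<xi>) *\<^sub>R (tens (H x) \<xi> + tens \<xi> (H x))))"
    using k unfolding ppi_def z c_def c'_def w2_def Let_def by auto
  have Q: "qq rho pr H gam k z = rho x * \<tau>\<^sup>2 - c"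
    using k unfolding qq_def z c_def by (auto simp: algebra_simps)
  note M = magnetoacoustic_projector[OF s p cr hx cc, folded U]
  show "ppi rho pr H gam k z = (1 / (u \<bullet> u)) *\<^sub>R tens u u" unfolding P using M(1) .
  show "u \<bullet> u \<noteq> 0" by (rule M(3))
  show "p2 rho pr H gam z *v u = qq rho pr H gam k z *\<^sub>R u" unfolding Q unfolding z p2_eq using M(2)[of "rho x" \<tau>] .
qed

lemma ppi_rank_one:
  assumes "nondegenerate rho pr H gam z" and "k \<in> {1, 2, 3}"
  defines "u \<equiv> eigvec rho pr H gam k z"
  shows "ppi rho pr H gam k z = (1 / (u \<bullet> u)) *\<^sub>R tens u u" and "u \<bullet> u \<noteq> 0"
    and "p2 rho pr H gam z *v u = qq rho pr H gam k z *\<^sub>R u"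
  using assms ppi_alfven[OF assms(1)] ppi_magnetoacoustic[OF assms(1), of k] by auto

lemma eigvec_orthogonal:
  assumes "nondegenerate rho pr H gam z" and "k \<in> {1, 2, 3}" and "l \<in> {1, 2, 3}" and "k \<noteq> l"
  shows "eigvec rho pr H gam k z \<bullet> eigvec rho pr H gam l z = 0"
proof -
  obtain t x \<tau> \<xi> where z: "z = (t, x, \<tau>, \<xi>)" by (cases z) auto
  have r: "rho x > 0" and c: "csq rho pr gam x > 0" and cr: "cross3 \<xi> (H x) \<noteq> 0"
    using assms(1) unfolding nondegenerate_def z by auto
  define cs where "cs = rho x * cs2 rho pr H gam x \<xi>"
  define cf where "cf = rho x * cf2 rho pr H gam x \<xi>"
  note V = slow_fast_vieta[where rho = rho and x = x and H = H and \<xi> = \<xi>, OF r c cr, folded cs_def cf_def]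
  have U1: "eigvec rho pr H gam 1 z = cross3 \<xi> (H x)"
    and U2: "eigvec rho pr H gam 2 z = ((H x \<bullet> \<xi>) * (norm \<xi>)\<^sup>2) *\<^sub>R H x - cs *\<^sub>R \<xi>"
    and U3: "eigvec rho pr H gam 3 z = ((H x \<bullet> \<xi>) * (norm \<xi>)\<^sup>2) *\<^sub>R H x - cf *\<^sub>R \<xi>"
    unfolding eigvec_def z cs_def cf_def by simp_all
  have "eigvec rho pr H gam 1 z \<bullet> eigvec rho pr H gam 2 z = 0" "eigvec rho pr H gam 1 z \<bullet> eigvec rho pr H gam 3 z = 0"
    unfolding U1 U2 U3 by (simp_all add: inner_diff_right dot_cross_self)
  moreover have "eigvec rho pr H gam 2 z \<bullet> eigvec rho pr H gam 3 z =
     (H x \<bullet> \<xi>)\<^sup>2 * ((norm \<xi>)\<^sup>2)\<^sup>2 * (norm (H x))\<^sup>2 - (H x \<bullet> \<xi>)\<^sup>2 * (norm \<xi>)\<^sup>2 * (cs + cf) + (cs * cf) * (norm \<xi>)\<^sup>2"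
    unfolding U2 U3 power2_norm_eq_inner
    by (simp add: inner_diff_left inner_diff_right inner_commute algebra_simps power2_eq_square)
  then have "eigvec rho pr H gam 2 z \<bullet> eigvec rho pr H gam 3 z = 0"
    unfolding V(1,2) by (simp add: algebra_simps power2_eq_square)
  ultimately show ?thesis using assms(2-4) by (auto simp: inner_commute)
qed

text \<open>The explicit formulas for \<open>\<pi>\<^sub>2 + \<pi>\<^sub>3\<close> combine to \<open>-w\<^sup>2/|\<xi> \<times> H|\<^sup>2\<close>, which cancels
  the \<open>w\<^sup>2\<close>-term of \<open>\<pi>\<^sub>1\<close>.\<close>

lemma ppi_sum:
  assumes "nondegenerate rho pr H gam z"
  shows "ppi rho pr H gam 1 z + ppi rho pr H gam 2 z + ppi rho pr H gam 3 z = mat 1"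
proof -
  obtain t x \<tau> \<xi> where z: "z = (t, x, \<tau>, \<xi>)" by (cases z) auto
  have r: "rho x > 0" and c: "csq rho pr gam x > 0" and "\<xi> \<bullet> H x \<noteq> 0" and cr: "cross3 \<xi> (H x) \<noteq> 0"
    using assms(1) unfolding nondegenerate_def z by auto
  then have hx: "H x \<bullet> \<xi> \<noteq> 0" by (simp add: inner_commute)
  define cs where "cs = rho x * cs2 rho pr H gam x \<xi>"
  define cf where "cf = rho x * cf2 rho pr H gam x \<xi>"
  note V = slow_fast_vieta[where rho = rho and x = x and H = H and \<xi> = \<xi>, OF r c cr, folded cs_def cf_def]
  define W where "W = w2 H x \<xi>"
  define B where "B = (gam * pr x + (norm (H x))\<^sup>2) *\<^sub>R tens \<xi> \<xi> - (H x \<bullet> \<xi>) *\<^sub>R (tens \<xi> (H x) + tens (H x) \<xi>)"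
  define bb where "bb = (norm (cross3 \<xi> (H x)))\<^sup>2"
  have bb: "bb > 0" unfolding bb_def using cr by simp
  have n2: "(norm \<xi>)\<^sup>2 > 0" using cr by auto
  have lag: "bb + (H x \<bullet> \<xi>)\<^sup>2 = (norm \<xi>)\<^sup>2 * (norm (H x))\<^sup>2" unfolding bb_def by (rule norm_cross3_sq)
  have "(H x \<bullet> \<xi>)\<^sup>2 - (norm (H x))\<^sup>2 * (norm \<xi>)\<^sup>2 = - bb" using lag by (simp add: algebra_simps)
  then have P1: "ppi rho pr H gam 1 z = mat 1 + (1 / (- bb)) *\<^sub>R W"
    unfolding ppi_def z W_def by simp
  have P2: "ppi rho pr H gam 2 z = (1 / (cs - cf)) *\<^sub>R (B + ((H x \<bullet> \<xi>)\<^sup>2 / (cs - (H x \<bullet> \<xi>)\<^sup>2)) *\<^sub>R W)"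
    and P3: "ppi rho pr H gam 3 z = (1 / (cf - cs)) *\<^sub>R (B + ((H x \<bullet> \<xi>)\<^sup>2 / (cf - (H x \<bullet> \<xi>)\<^sup>2)) *\<^sub>R W)"
    unfolding ppi_def z cs_def cf_def W_def B_def Let_def by simp_all
  note E = magnetoacoustic_root_identities[OF V(1,2) lag bb n2 hx V(3)]
  define k2 where "k2 = (H x \<bullet> \<xi>)\<^sup>2 / (cs - (H x \<bullet> \<xi>)\<^sup>2)"
  define k3 where "k3 = (H x \<bullet> \<xi>)\<^sup>2 / (cf - (H x \<bullet> \<xi>)\<^sup>2)"
  have d2: "cf - (H x \<bullet> \<xi>)\<^sup>2 \<noteq> 0" using E(1) bb hx by auto
  have "k2 - k3 = (H x \<bullet> \<xi>)\<^sup>2 * (cf - cs) / ((cs - (H x \<bullet> \<xi>)\<^sup>2) * (cf - (H x \<bullet> \<xi>)\<^sup>2))"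
    unfolding k2_def k3_def using E(2) d2 by (simp add: field_simps)
  also have "\<dots> = (cs - cf) / bb" unfolding E(1) using hx bb by (simp add: field_simps)
  finally have kk: "(k2 - k3) / (cs - cf) = 1 / bb" using V(3) by simp
  have "1 / (cf - cs) = - (1 / (cs - cf))" by (simp add: minus_divide_right)
  then have "ppi rho pr H gam 2 z + ppi rho pr H gam 3 z = ((k2 - k3) / (cs - cf)) *\<^sub>R W"
    unfolding P2 P3 k2_def[symmetric] k3_def[symmetric]
    by (simp add: algebra_simps diff_divide_distrib)
  then show ?thesis unfolding add.assoc kk P1 by simp
qed

lemma ppi_mult:
  assumes g: "nondegenerate rho pr H gam z" and k: "k \<in> {1, 2, 3}" and l: "l \<in> {1, 2, 3}"
  shows "ppi rho pr H gam k z ** ppi rho pr H gam l z = (if k = l then ppi rho pr H gam l z else 0)"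
proof -
  note A = ppi_rank_one[OF g k] and B = ppi_rank_one[OF g l]
  have "ppi rho pr H gam k z ** ppi rho pr H gam l z
      = ((eigvec rho pr H gam k z \<bullet> eigvec rho pr H gam l z)
         / ((eigvec rho pr H gam k z \<bullet> eigvec rho pr H gam k z) * (eigvec rho pr H gam l z \<bullet> eigvec rho pr H gam l z)))
        *\<^sub>R tens (eigvec rho pr H gam k z) (eigvec rho pr H gam l z)"
    unfolding A(1) B(1) by (simp add: matrix_scalar_ac scalar_matrix_assoc[symmetric] tens_mult)
  then show ?thesis using B(2) eigvec_orthogonal[OF g k l] by (cases "k = l") (simp_all add: B(1))
qed

lemma ppi_symmetric:
  assumes "nondegenerate rho pr H gam z" and "k \<in> {1, 2, 3}"
  shows "transpose (ppi rho pr H gam k z) = ppi rho pr H gam k z"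
  unfolding ppi_rank_one(1)[OF assms] transpose_scalar transpose_tens ..

lemma p2_symmetric: "transpose (p2 rho pr H gam z) = p2 rho pr H gam z"
  by (cases z) (simp add: p2_eq transpose_add transpose_diff transpose_scalar transpose_tens algebra_simps)

lemma p2_spectral_decomposition:
  assumes g: "nondegenerate rho pr H gam z"
  shows "p2 rho pr H gam z = (\<Sum>k\<in>{1,2,3}. qq rho pr H gam k z *\<^sub>R ppi rho pr H gam k z)"
proof -
  have "p2 rho pr H gam z ** ppi rho pr H gam k z = qq rho pr H gam k z *\<^sub>R ppi rho pr H gam k z"
    if k: "k \<in> {1, 2, 3}" for k
    unfolding ppi_rank_one(1)[OF g k]
    by (simp add: matrix_scaleR_right matrix_mult_tens ppi_rank_one(3)[OF g k] tens_scale_left)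
  moreover have "p2 rho pr H gam z = p2 rho pr H gam z ** (ppi rho pr H gam 1 z + ppi rho pr H gam 2 z + ppi rho pr H gam 3 z)"
    unfolding ppi_sum[OF g] by simp
  ultimately show ?thesis by (simp add: matrix_add_ldistrib add.assoc)
qed

lemma nondegenerate_denominators:
  assumes g: "nondegenerate rho pr H gam (t, x, \<tau>, \<xi>)"
  shows "rho x * cs2 rho pr H gam x \<xi> - rho x * cf2 rho pr H gam x \<xi> \<noteq> 0"
    "rho x * cs2 rho pr H gam x \<xi> - (H x \<bullet> \<xi>)\<^sup>2 \<noteq> 0"
    "rho x * cf2 rho pr H gam x \<xi> - (H x \<bullet> \<xi>)\<^sup>2 \<noteq> 0"
    "(H x \<bullet> \<xi>)\<^sup>2 - (norm (H x))\<^sup>2 * (norm \<xi>)\<^sup>2 \<noteq> 0"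
proof -
  have r: "rho x > 0" and c: "csq rho pr gam x > 0" and hx0: "\<xi> \<bullet> H x \<noteq> 0" and cr: "cross3 \<xi> (H x) \<noteq> 0"
    using g unfolding nondegenerate_def by auto
  have hx: "H x \<bullet> \<xi> \<noteq> 0" using hx0 by (simp add: inner_commute)
  note V = slow_fast_vieta[where rho = rho and x = x and H = H and \<xi> = \<xi>, OF r c cr]
  have n2: "(norm \<xi>)\<^sup>2 > 0" using cr by auto
  have bb: "(norm (cross3 \<xi> (H x)))\<^sup>2 > 0" using cr by simp
  have lag: "(norm (cross3 \<xi> (H x)))\<^sup>2 + (H x \<bullet> \<xi>)\<^sup>2 = (norm \<xi>)\<^sup>2 * (norm (H x))\<^sup>2"
    by (rule norm_cross3_sq)
  note E = magnetoacoustic_root_identities[OF V(1,2) lag bb n2 hx V(3)]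
  show "rho x * cs2 rho pr H gam x \<xi> - rho x * cf2 rho pr H gam x \<xi> \<noteq> 0" using V(3) by simp
  show "rho x * cs2 rho pr H gam x \<xi> - (H x \<bullet> \<xi>)\<^sup>2 \<noteq> 0" using E(2) .
  show "rho x * cf2 rho pr H gam x \<xi> - (H x \<bullet> \<xi>)\<^sup>2 \<noteq> 0" using E(1) bb hx by auto
  have "(H x \<bullet> \<xi>)\<^sup>2 - (norm (H x))\<^sup>2 * (norm \<xi>)\<^sup>2 = - (norm (cross3 \<xi> (H x)))\<^sup>2"
    using lag by (simp add: algebra_simps)
  then show "(H x \<bullet> \<xi>)\<^sup>2 - (norm (H x))\<^sup>2 * (norm \<xi>)\<^sup>2 \<noteq> 0" using bb by simp
qed

lemma p2_mult_ppi:
  assumes "nondegenerate rho pr H gam z" and "k \<in> {1, 2, 3}"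
  shows "p2 rho pr H gam z ** ppi rho pr H gam k z = qq rho pr H gam k z *\<^sub>R ppi rho pr H gam k z"
  unfolding ppi_rank_one(1)[OF assms]
  by (simp add: matrix_scaleR_right matrix_mult_tens ppi_rank_one(3)[OF assms] tens_scale_left)

definition ppi_complement_inverse :: "(real^3 \<Rightarrow> real) \<Rightarrow> (real^3 \<Rightarrow> real) \<Rightarrow> (real^3 \<Rightarrow> real^3) \<Rightarrow> real
    \<Rightarrow> nat \<Rightarrow> pt \<Rightarrow> real^3^3" where
  "ppi_complement_inverse rho pr H gam j z
     = (\<Sum>k\<in>{1,2,3} - {j}. (1 / qq rho pr H gam k z) *\<^sub>R ppi rho pr H gam k z)"

lemma ptil_eq: "ptil rho pr H gam j z
    = ppi rho pr H gam j z + qq rho pr H gam j z *\<^sub>R ppi_complement_inverse rho pr H gam j z"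
  unfolding ptil_def ppi_complement_inverse_def scaleR_sum_right by (simp add: field_simps)

lemma ppi_complement_inverse_mult:
  assumes g: "nondegenerate rho pr H gam z" and j: "j \<in> {1, 2, 3}" and qj: "qq rho pr H gam j z = 0"
    and qk: "\<forall>k\<in>{1,2,3} - {j}. qq rho pr H gam k z \<noteq> 0"
  shows "ppi_complement_inverse rho pr H gam j z ** p2 rho pr H gam z = mat 1 - ppi rho pr H gam j z"
    and "ppi_complement_inverse rho pr H gam j z ** ppi rho pr H gam j z = 0"
proof -
  let ?P = "\<lambda>k. ppi rho pr H gam k z" and ?q = "\<lambda>k. qq rho pr H gam k z"
  let ?R = "ppi_complement_inverse rho pr H gam j z"
  have p2: "p2 rho pr H gam z = ?q 1 *\<^sub>R ?P 1 + ?q 2 *\<^sub>R ?P 2 + ?q 3 *\<^sub>R ?P 3"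
    unfolding p2_spectral_decomposition[OF g] by (simp add: add.assoc)
  note sum = ppi_sum[OF g] and mult = ppi_mult[OF g]
  have "?R ** p2 rho pr H gam z = mat 1 - ?P j \<and> ?R ** ?P j = 0"
    using j qj qk sum unfolding ppi_complement_inverse_def p2
    by (elim insertE emptyE)
      (simp_all add: insert_Diff_if matrix_distribs mult eq_diff_eq add.commute add.left_commute)
  then show "?R ** p2 rho pr H gam z = mat 1 - ?P j" and "?R ** ?P j = 0" by simp_all
qed

section \<open>Derivatives\<close>

lemma dir_deriv_has_derivative:
  assumes "(f has_derivative f') (at z)"
  shows "dir_deriv f v z = f' v"
proof -
  have "((\<lambda>s::real. z + s *\<^sub>R v) has_derivative (\<lambda>s. s *\<^sub>R v)) (at 0)"
    by (auto intro!: derivative_eq_intros)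
  from has_derivative_compose[OF this, of f f'] assms
  have "((\<lambda>s::real. f (z + s *\<^sub>R v)) has_derivative (\<lambda>s. f' (s *\<^sub>R v))) (at 0)" by simp
  then have "((\<lambda>s::real. f (z + s *\<^sub>R v)) has_vector_derivative f' v) (at 0)"
    unfolding has_vector_derivative_def
    using linear_scale[OF has_derivative_linear[OF assms]] by simp
  then show ?thesis unfolding dir_deriv_def by (rule vector_derivative_at)
qed

lemma dir_deriv_frechet:
  "f differentiable (at z) \<Longrightarrow> dir_deriv f v z = frechet_derivative f (at z) v"
  using dir_deriv_has_derivative frechet_derivative_works by blast

lemma frechet_derivative_eq_on_open:
  assumes "open U" "z \<in> U" "\<And>w. w \<in> U \<Longrightarrow> f w = g w" "g differentiable (at z)"
  shows "frechet_derivative f (at z) = frechet_derivative g (at z)"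
proof -
  have "(f has_derivative frechet_derivative g (at z)) (at z)"
    using has_derivative_transform_within_open[of g _ z UNIV U f] assms
    unfolding frechet_derivative_works by auto
  then show ?thesis by (rule frechet_derivative_at[symmetric])
qed

lemma frechet_derivative_bounded_bilinear:
  assumes "bounded_bilinear B" "f differentiable (at z)" "g differentiable (at z)"
  shows "frechet_derivative (\<lambda>w. B (f w) (g w)) (at z)
    = (\<lambda>h. B (f z) (frechet_derivative g (at z) h) + B (frechet_derivative f (at z) h) (g z))"
  using frechet_derivative_at[OF bounded_bilinear.FDERIV[OF assms(1)
      assms(2)[unfolded frechet_derivative_works] assms(3)[unfolded frechet_derivative_works]]] ..

lemma frechet_derivative_bounded_linear:
  assumes "bounded_linear L" "f differentiable (at z)"
  shows "frechet_derivative (\<lambda>w. L (f w)) (at z) = (\<lambda>h. L (frechet_derivative f (at z) h))"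
  using frechet_derivative_at[OF bounded_linear.has_derivative[OF assms(1)
      assms(2)[unfolded frechet_derivative_works]]] ..

lemma differentiable_bounded_bilinear:
  assumes "bounded_bilinear B" "f differentiable (at z within S)" "g differentiable (at z within S)"
  shows "(\<lambda>w. B (f w) (g w)) differentiable (at z within S)"
  using assms bounded_bilinear.FDERIV[OF assms(1)] unfolding differentiable_def by blast

lemma differentiable_bounded_linear:
  assumes "bounded_linear L" "f differentiable (at z)"
  shows "(\<lambda>w. L (f w)) differentiable (at z)"
  using assms bounded_linear.has_derivative unfolding differentiable_def by blast

lemma bounded_bilinear_cross3: "bounded_bilinear cross3"
  using bilinear_cross bilinear_conv_bounded_bilinear by blast

lemma bounded_linear_cross3_right: "bounded_linear (\<lambda>w. cross3 a w)"
  by (rule bounded_bilinear.bounded_linear_right[OF bounded_bilinear_cross3])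

lemmas differentiable_tens = differentiable_bounded_bilinear[OF bounded_bilinear_tens]

lemmas differentiable_cross3 = differentiable_bounded_bilinear[OF bounded_bilinear_cross3]

lemmas differentiable_inner = differentiable_bounded_bilinear[OF bounded_bilinear_inner]

lemma differentiable_sqrt_pos:
  assumes "f differentiable (at z)" "f z > 0"
  shows "(\<lambda>w. sqrt (f w)) differentiable (at z)"
  using assms has_derivative_real_sqrt unfolding differentiable_def by blast

lemma differentiable_fst [derivative_intros]: "f differentiable F \<Longrightarrow> (\<lambda>w. fst (f w)) differentiable F"
  using bounded_linear_fst unfolding differentiable_def by (blast intro: bounded_linear.has_derivative)

lemma differentiable_snd [derivative_intros]: "f differentiable F \<Longrightarrow> (\<lambda>w. snd (f w)) differentiable F"
  using bounded_linear_snd unfolding differentiable_def by (blast intro: bounded_linear.has_derivative)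

lemma dT_time_independent:
  assumes "\<And>s. F (s, x, \<tau>, \<xi>) = F (t, x, \<tau>, \<xi>)"
  shows "dT F (t, x, \<tau>, \<xi>) = 0"
proof -
  have "(\<lambda>s::real. F ((t, x, \<tau>, \<xi>) + s *\<^sub>R (1, 0, 0, 0))) = (\<lambda>s. F (t, x, \<tau>, \<xi>))"
  proof
    fix s :: real
    show "F ((t, x, \<tau>, \<xi>) + s *\<^sub>R (1, 0, 0, 0)) = F (t, x, \<tau>, \<xi>)" using assms[of "t + s"] by simp
  qed
  then show ?thesis unfolding dT_def dir_deriv_def by simp
qed

lemma smooth_on_differentiable:
  assumes "smooth_on UNIV f" shows "f differentiable (at x)"
proof -
  have "set [] \<subseteq> (Basis :: 'a::euclidean_space set)" by simp
  with assms have "iter_dd [] f differentiable (at x)" unfolding smooth_on_def by blast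
  then show ?thesis by simp
qed

lemma smooth_on_pd3_differentiable:
  assumes "smooth_on UNIV f" shows "pd3 f m differentiable (at x)"
proof -
  have "set [axis m 1] \<subseteq> (Basis :: (real^3) set)" by simp
  with assms have "iter_dd [axis m 1] f differentiable (at x)" unfolding smooth_on_def by blast
  then show ?thesis by (simp add: pd3_def)
qed

section \<open>The full symbol\<close>

definition plane_wave :: "real \<Rightarrow> real^3 \<Rightarrow> real \<times> (real^3) \<Rightarrow> complex" where
  "plane_wave \<tau> \<xi> y = exp (\<i> * complex_of_real (fst y * \<tau> + snd y \<bullet> \<xi>))"

lemma scaleR_cvec3: "r *\<^sub>R (v::complex^3) = complex_of_real r *s v"
  unfolding vec_eq_iff by (simp add: vector_scaleR_component del: scaleR_conv_of_real) (simp add: scaleR_conv_of_real)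

lemma bounded_bilinear_smult: "bounded_bilinear (\<lambda>(c::complex) (v::complex^3). c *s v)"
proof -
  have "bilinear (\<lambda>(c::complex) (v::complex^3). c *s v)"
    unfolding bilinear_def
    by (auto intro!: linearI simp: scaleR_cvec3 scaleR_conv_of_real vector_sadd_rdistrib vector_add_ldistrib)
  then show ?thesis using bilinear_conv_bounded_bilinear by blast
qed

lemma plane_wave_has_derivative:
  "(plane_wave \<tau> \<xi> has_derivative (\<lambda>h. plane_wave \<tau> \<xi> y * (\<i> * complex_of_real (fst h * \<tau> + snd h \<bullet> \<xi>)))) (at y)"
proof -
  have p: "((\<lambda>y. \<i> * complex_of_real (fst y * \<tau> + snd y \<bullet> \<xi>)) has_derivative
      (\<lambda>h. \<i> * complex_of_real (fst h * \<tau> + snd h \<bullet> \<xi>))) (at y)"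
  proof -
    have "bounded_linear (\<lambda>h::real \<times> (real^3). \<i> * complex_of_real (fst h * \<tau> + snd h \<bullet> \<xi>))"
      by (intro bounded_linear_intros bounded_linear_mult_right[THEN bounded_linear_compose]
          bounded_linear_of_real[THEN bounded_linear_compose])
    then show ?thesis by (rule bounded_linear_imp_has_derivative)
  qed
  have "((\<lambda>y. exp (\<i> * complex_of_real (fst y * \<tau> + snd y \<bullet> \<xi>))) has_derivative
     (\<lambda>h. \<i> * complex_of_real (fst h * \<tau> + snd h \<bullet> \<xi>) * exp (\<i> * complex_of_real (fst y * \<tau> + snd y \<bullet> \<xi>)))) (at y)"
    using has_derivative_compose[OF p has_field_derivative_imp_has_derivative[OF DERIV_exp]]
    by (simp add: mult_ac)
  then show ?thesis unfolding plane_wave_def by (simp add: mult_ac)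
qed

lemma has_derivative_snd_comp:
  assumes "(F has_derivative F') (at (snd y))"
  shows "((\<lambda>y::real \<times> (real^3). F (snd y)) has_derivative (\<lambda>h. F' (snd h))) (at y)"
  using has_derivative_compose[OF has_derivative_snd[OF has_derivative_ident] assms] by simp

lemma plane_wave_smult_has_derivative:
  fixes F :: "real^3 \<Rightarrow> complex^3"
  assumes "(F has_derivative F') (at (snd y))"
  shows "((\<lambda>y. plane_wave \<tau> \<xi> y *s F (snd y)) has_derivative
    (\<lambda>h. plane_wave \<tau> \<xi> y *s F' (snd h) + (plane_wave \<tau> \<xi> y * (\<i> * complex_of_real (fst h * \<tau> + snd h \<bullet> \<xi>))) *s F (snd y))) (at y)"
  using bounded_bilinear.FDERIV[OF bounded_bilinear_smult plane_wave_has_derivative has_derivative_snd_comp[OF assms]]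
  by simp

lemma plane_wave_mult_has_derivative:
  fixes f :: "real^3 \<Rightarrow> complex"
  assumes "(f has_derivative f') (at (snd y))"
  shows "((\<lambda>y. plane_wave \<tau> \<xi> y * f (snd y)) has_derivative
    (\<lambda>h. plane_wave \<tau> \<xi> y * f' (snd h) + (plane_wave \<tau> \<xi> y * (\<i> * complex_of_real (fst h * \<tau> + snd h \<bullet> \<xi>))) * f (snd y))) (at y)"
  using bounded_bilinear.FDERIV[OF bounded_bilinear_mult plane_wave_has_derivative has_derivative_snd_comp[OF assms]]
  by simp

lemma pd3_has_derivative: "(F has_derivative F') (at x) \<Longrightarrow> pd3 F j x = F' (axis j 1)"
  unfolding pd3_def by (rule dir_deriv_has_derivative)

lemma inner_axis_one: "axis j 1 \<bullet> (\<xi>::real^'n) = \<xi> $ j"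
  by (simp add: inner_axis')

lemma dsp_plane_wave:
  fixes F :: "real^3 \<Rightarrow> complex^3"
  assumes "F differentiable (at (snd y))"
  shows "dsp (\<lambda>y. plane_wave \<tau> \<xi> y *s F (snd y)) j y = plane_wave \<tau> \<xi> y *s (pd3 F j (snd y) + (\<i> * complex_of_real (\<xi> $ j)) *s F (snd y))"
proof -
  obtain F' where F: "(F has_derivative F') (at (snd y))" using assms unfolding differentiable_def by blast
  show ?thesis unfolding dsp_def dir_deriv_has_derivative[OF plane_wave_smult_has_derivative[OF F]] pd3_has_derivative[OF F]
    by (simp add: inner_axis_one vector_add_ldistrib vector_smult_assoc)
qed

lemma dtm_plane_wave:
  fixes F :: "real^3 \<Rightarrow> complex^3"
  assumes "F differentiable (at (snd y))"
  shows "dtm (\<lambda>y. plane_wave \<tau> \<xi> y *s F (snd y)) y = plane_wave \<tau> \<xi> y *s ((\<i> * complex_of_real \<tau>) *s F (snd y))"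
proof -
  obtain F' where F: "(F has_derivative F') (at (snd y))" using assms unfolding differentiable_def by blast
  have "F' 0 = 0" using F has_derivative_linear linear_0 by blast
  then show ?thesis unfolding dtm_def dir_deriv_has_derivative[OF plane_wave_smult_has_derivative[OF F]]
    by (simp add: vector_smult_assoc)
qed

lemma dsp_plane_wave_scalar:
  fixes f :: "real^3 \<Rightarrow> complex"
  assumes "f differentiable (at (snd y))"
  shows "dsp (\<lambda>y. plane_wave \<tau> \<xi> y * f (snd y)) j y = plane_wave \<tau> \<xi> y * (pd3 f j (snd y) + (\<i> * complex_of_real (\<xi> $ j)) * f (snd y))"
proof -
  obtain f' where F: "(f has_derivative f') (at (snd y))" using assms unfolding differentiable_def by blast
  show ?thesis unfolding dsp_def dir_deriv_has_derivative[OF plane_wave_mult_has_derivative[OF F]] pd3_has_derivative[OF F]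
    by (simp add: inner_axis_one algebra_simps)
qed

lemma dsp_snd:
  assumes "F differentiable (at (snd y))"
  shows "dsp (\<lambda>y. F (snd y)) j y = pd3 F j (snd y)"
proof -
  obtain F' where F: "(F has_derivative F') (at (snd y))" using assms unfolding differentiable_def by blast
  show ?thesis unfolding dsp_def dir_deriv_has_derivative[OF has_derivative_snd_comp[OF F]] pd3_has_derivative[OF F] by simp
qed

lemma bounded_linear_cvec: "bounded_linear cvec"
proof -
  have "linear cvec" by (auto intro!: linearI simp: cvec_def vec_eq_iff scaleR_cvec3)
  then show ?thesis using linear_conv_bounded_linear by blast
qed

lemma cvec_has_derivative:
  "(F has_derivative F') (at x) \<Longrightarrow> ((\<lambda>x. cvec (F x)) has_derivative (\<lambda>h. cvec (F' h))) (at x)"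
  using bounded_linear.has_derivative[OF bounded_linear_cvec] .

lemma of_real_has_derivative:
  "(f has_derivative f') (at x) \<Longrightarrow> ((\<lambda>x. complex_of_real (f x)) has_derivative (\<lambda>h. complex_of_real (f' h))) (at x)"
  using bounded_linear.has_derivative[OF bounded_linear_of_real] .

lemma pd3_cvec:
  assumes "F differentiable (at x)" shows "pd3 (\<lambda>x. cvec (F x)) j x = cvec (pd3 F j x)"
proof -
  obtain F' where F: "(F has_derivative F') (at x)" using assms unfolding differentiable_def by blast
  show ?thesis unfolding pd3_has_derivative[OF F] pd3_has_derivative[OF cvec_has_derivative[OF F]] ..
qed

lemma pd3_of_real:
  assumes "f differentiable (at x)" shows "pd3 (\<lambda>x. complex_of_real (f x)) j x = complex_of_real (pd3 f j x)"
proof -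
  obtain F' where F: "(f has_derivative F') (at x)" using assms unfolding differentiable_def by blast
  show ?thesis unfolding pd3_has_derivative[OF F] pd3_has_derivative[OF of_real_has_derivative[OF F]] ..
qed

lemma differentiable_cvec: "F differentiable (at x) \<Longrightarrow> (\<lambda>x. cvec (F x)) differentiable (at x)"
  unfolding differentiable_def using cvec_has_derivative by blast

lemma differentiable_of_real: "f differentiable (at x) \<Longrightarrow> (\<lambda>x. complex_of_real (f x)) differentiable (at x)"
  unfolding differentiable_def using of_real_has_derivative by blast

lemma ccross_cvec: "ccross (cvec a) (cvec b) = cvec (cross3 a b)"
  by (simp add: ccross_def cvec_def cross3_simps vec_eq_iff forall_3)

lemma cdot_cvec: "cdot (cvec a) (cvec b) = complex_of_real (a \<bullet> b)"
  by (simp add: cdot_def cvec_def inner_vec_def)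

lemma pd3_const: "pd3 (\<lambda>x. c) j x = 0"
proof -
  have "((\<lambda>x. c) has_derivative (\<lambda>h. 0)) (at x)" by simp
  from pd3_has_derivative[OF this] show ?thesis by simp
qed

lemma vector3_smult: "(vector [e * a, e * b, e * c] :: complex^3) = (e::complex) *s vector [a, b, c]"
  by (simp add: vec_eq_iff forall_3 vector_3)

lemma cdot_smult_left: "cdot (c *s a) b = c * cdot a b"
  by (simp add: cdot_def sum_distrib_left mult.assoc)

lemma ccross_smult_left: "ccross (c *s a) b = c *s ccross a b"
  by (simp add: ccross_def vec_eq_iff forall_3 vector_3 algebra_simps)

lemma complex_field_has_derivative:
  fixes A B :: "real^3 \<Rightarrow> real^3"
  assumes "(A has_derivative A') (at x)" "(B has_derivative B') (at x)"
  shows "((\<lambda>x. cvec (A x) + \<i> *s cvec (B x)) has_derivative (\<lambda>h. cvec (A' h) + \<i> *s cvec (B' h))) (at x)"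
proof -
  have "bounded_linear (\<lambda>v::complex^3. \<i> *s v)"
  proof -
    have "linear (\<lambda>v::complex^3. \<i> *s v)"
      by (auto intro!: linearI simp: vec_eq_iff scaleR_cvec3 algebra_simps)
    then show ?thesis using linear_conv_bounded_linear by blast
  qed
  from bounded_linear.has_derivative[OF this cvec_has_derivative[OF assms(2)]]
  show ?thesis using cvec_has_derivative[OF assms(1)] by (auto intro: has_derivative_add)
qed

lemma Xcurl_plane_wave:
  fixes A B :: "real^3 \<Rightarrow> real^3"
  assumes "A differentiable (at (snd y))" "B differentiable (at (snd y))"
  shows "Xcurl (\<lambda>y. plane_wave \<tau> \<xi> y *s (cvec (A (snd y)) + \<i> *s cvec (B (snd y)))) y =
    plane_wave \<tau> \<xi> y *s (cvec (curl3 A (snd y)) + \<i> *s cvec (curl3 B (snd y))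
       + \<i> *s cvec (cross3 \<xi> (A (snd y))) - cvec (cross3 \<xi> (B (snd y))))"
proof -
  obtain A' where A: "(A has_derivative A') (at (snd y))" using assms unfolding differentiable_def by blast
  obtain B' where B: "(B has_derivative B') (at (snd y))" using assms unfolding differentiable_def by blast
  note G = complex_field_has_derivative[OF A B]
  have Gd: "(\<lambda>x. cvec (A x) + \<i> *s cvec (B x)) differentiable (at (snd y))"
    using G unfolding differentiable_def by blast
  have D: "dsp (\<lambda>y. plane_wave \<tau> \<xi> y *s (cvec (A (snd y)) + \<i> *s cvec (B (snd y)))) j y =
     plane_wave \<tau> \<xi> y *s (cvec (pd3 A j (snd y)) + \<i> *s cvec (pd3 B j (snd y)) + (\<i> * complex_of_real (\<xi> $ j)) *s (cvec (A (snd y)) + \<i> *s cvec (B (snd y))))" for j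
    using dsp_plane_wave[OF Gd, of \<tau> \<xi> j] unfolding pd3_has_derivative[OF G] pd3_has_derivative[OF A] pd3_has_derivative[OF B] by simp
  show ?thesis unfolding Xcurl_def D curl3_def
    by (simp add: vec_eq_iff forall_3 vector_3 cvec_def cross3_simps algebra_simps)
qed

lemma vector3_axis: "(vector [a, b, c] :: real^3) = a *\<^sub>R axis 1 1 + b *\<^sub>R axis 2 1 + c *\<^sub>R axis 3 1"
  by (simp add: vec_eq_iff forall_3 axis_def)

lemma differentiable_vector3:
  fixes f1 f2 f3 :: "real^3 \<Rightarrow> real"
  assumes "f1 differentiable (at x)" "f2 differentiable (at x)" "f3 differentiable (at x)"
  shows "(\<lambda>x. vector [f1 x, f2 x, f3 x] :: real^3) differentiable (at x)"
  unfolding vector3_axis using assms by (intro derivative_intros) auto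

lemma differentiable_vec_nth:
  fixes F :: "real^3 \<Rightarrow> real^3"
  assumes "F differentiable (at x)" shows "(\<lambda>x. F x $ i) differentiable (at x)"
  using assms bounded_linear.has_derivative[OF bounded_linear_vec_nth] unfolding differentiable_def by blast

lemma pd3_bounded_linear:
  assumes "bounded_linear L" "F differentiable (at x)"
  shows "pd3 (\<lambda>x. L (F x)) j x = L (pd3 F j x)"
proof -
  obtain F' where F: "(F has_derivative F') (at x)" using assms unfolding differentiable_def by blast
  show ?thesis unfolding pd3_has_derivative[OF F] pd3_has_derivative[OF bounded_linear.has_derivative[OF assms(1) F]] ..
qed

text \<open>Real and imaginary parts of \<open>e\<^sup>-\<^sup>i\<^sup>\<phi> P(e\<^sup>i\<^sup>\<phi> v)\<close> for the plane wave
  \<open>e\<^sup>i\<^sup>\<phi> = plane_wave \<tau> \<xi>\<close>. The \<open>_expr\<close> versions take the curls as independent vectors,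
  which turns the evaluation of \<open>P\<close> on plane waves into a pointwise identity.\<close>

definition re_symbol_expr :: "real \<Rightarrow> real \<Rightarrow> real \<Rightarrow> real \<Rightarrow> real^3 \<Rightarrow> real^3 \<Rightarrow> real^3 \<Rightarrow> real^3 \<Rightarrow> real^3
     \<Rightarrow> real^3 \<Rightarrow> real^3 \<Rightarrow> real^3 \<Rightarrow> real^3" where
  "re_symbol_expr r \<tau> gam p0 \<xi> v hs Wv cA cW cH Hv =
     (r * \<tau>\<^sup>2) *\<^sub>R v - (gam * (\<xi> \<bullet> v) * p0) *\<^sub>R \<xi> + hs
     + cross3 (cA - cross3 \<xi> (cross3 \<xi> Wv)) Hv + cross3 cH cW"

definition im_symbol_expr :: "real \<Rightarrow> real^3 \<Rightarrow> real^3 \<Rightarrow> real^3 \<Rightarrow> real^3 \<Rightarrow> real^3 \<Rightarrow> real^3 \<Rightarrow> real^3 \<Rightarrow> real^3 \<Rightarrow> real^3" where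
  "im_symbol_expr gam gg \<xi> v Wv cB cW cH Hv =
     (gam * (\<xi> \<bullet> v)) *\<^sub>R gg + (v \<bullet> gg) *\<^sub>R \<xi>
     + cross3 (cB + cross3 \<xi> cW) Hv + cross3 cH (cross3 \<xi> Wv)"

definition re_symbol :: "(real^3 \<Rightarrow> real) \<Rightarrow> (real^3 \<Rightarrow> real) \<Rightarrow> (real^3 \<Rightarrow> real^3) \<Rightarrow> real
    \<Rightarrow> real^3 \<Rightarrow> real \<Rightarrow> real^3 \<Rightarrow> real^3 \<Rightarrow> real^3" where
  "re_symbol rho pr H gam x \<tau> \<xi> v = re_symbol_expr (rho x) \<tau> gam (pr x) \<xi> v
     (vector [v \<bullet> pd3 (grad3 pr) 1 x, v \<bullet> pd3 (grad3 pr) 2 x, v \<bullet> pd3 (grad3 pr) 3 x])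
     (cross3 v (H x)) (curl3 (curl3 (\<lambda>x. cross3 v (H x))) x) (curl3 (\<lambda>x. cross3 v (H x)) x) (curl3 H x) (H x)"

definition im_symbol :: "(real^3 \<Rightarrow> real) \<Rightarrow> (real^3 \<Rightarrow> real) \<Rightarrow> (real^3 \<Rightarrow> real^3) \<Rightarrow> real
    \<Rightarrow> real^3 \<Rightarrow> real \<Rightarrow> real^3 \<Rightarrow> real^3 \<Rightarrow> real^3" where
  "im_symbol rho pr H gam x \<tau> \<xi> v = im_symbol_expr gam (grad3 pr x) \<xi> v (cross3 v (H x))
     (curl3 (\<lambda>x. cross3 \<xi> (cross3 v (H x))) x) (curl3 (\<lambda>x. cross3 v (H x)) x) (curl3 H x) (H x)"

lemma Pop_plane_wave_algebra:
  fixes e :: complex and r \<tau> gam p0 g1 g2 g3 h1 h2 h3 :: real and \<xi> v gg Wv cA cB cW cH Hv :: "real^3"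
  assumes gg: "gg = vector [g1, g2, g3]"
  shows "- (complex_of_real r *s (e *s ((\<i> * complex_of_real \<tau>) *s ((\<i> * complex_of_real \<tau>) *s cvec v))))
   + complex_of_real gam *s (e *s vector [
       complex_of_real g1 * (\<i> * complex_of_real (\<xi> \<bullet> v)) + (\<i> * complex_of_real (\<xi> $ 1)) * (complex_of_real p0 * (\<i> * complex_of_real (\<xi> \<bullet> v))),
       complex_of_real g2 * (\<i> * complex_of_real (\<xi> \<bullet> v)) + (\<i> * complex_of_real (\<xi> $ 2)) * (complex_of_real p0 * (\<i> * complex_of_real (\<xi> \<bullet> v))),
       complex_of_real g3 * (\<i> * complex_of_real (\<xi> \<bullet> v)) + (\<i> * complex_of_real (\<xi> $ 3)) * (complex_of_real p0 * (\<i> * complex_of_real (\<xi> \<bullet> v)))])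
   + e *s vector [complex_of_real h1 + (\<i> * complex_of_real (\<xi> $ 1)) * complex_of_real (v \<bullet> gg),
                  complex_of_real h2 + (\<i> * complex_of_real (\<xi> $ 2)) * complex_of_real (v \<bullet> gg),
                  complex_of_real h3 + (\<i> * complex_of_real (\<xi> $ 3)) * complex_of_real (v \<bullet> gg)]
   + ccross (e *s (cvec cA + \<i> *s cvec cB + \<i> *s cvec (cross3 \<xi> cW) - cvec (cross3 \<xi> (cross3 \<xi> Wv)))) (cvec Hv)
   + ccross (cvec cH) (e *s (cvec cW + \<i> *s cvec (cross3 \<xi> Wv)))
   = e *s (cvec (re_symbol_expr r \<tau> gam p0 \<xi> v (vector [h1, h2, h3]) Wv cA cW cH Hv) + \<i> *s cvec (im_symbol_expr gam gg \<xi> v Wv cB cW cH Hv))"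
  unfolding gg re_symbol_expr_def im_symbol_expr_def
  by (simp add: vec_eq_iff forall_3 cvec_def ccross_def cross3_simps power2_eq_square algebra_simps)

lemma cvec_zero: "cvec 0 = 0"
  by (simp add: cvec_def vec_eq_iff)

lemma curl3_zero: "curl3 (\<lambda>x. 0) x = 0"
  by (simp add: curl3_def pd3_const vec_eq_iff forall_3)

lemma dtm_dtm_plane_wave_const:
  fixes c :: "complex^3"
  shows "dtm (dtm (\<lambda>y. plane_wave \<tau> \<xi> y *s c)) w
    = plane_wave \<tau> \<xi> w *s ((\<i> * complex_of_real \<tau>) *s ((\<i> * complex_of_real \<tau>) *s c))"
proof -
  have "dtm (\<lambda>y. plane_wave \<tau> \<xi> y *s c) = (\<lambda>y. plane_wave \<tau> \<xi> y *s ((\<i> * complex_of_real \<tau>) *s c))"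
    using dtm_plane_wave[of "\<lambda>_. c"] by (auto intro!: ext)
  then show ?thesis using dtm_plane_wave[of "\<lambda>_. (\<i> * complex_of_real \<tau>) *s c"] by auto
qed

lemma Xdiv_plane_wave_const:
  "Xdiv (\<lambda>y. plane_wave \<tau> \<xi> y *s cvec v) = (\<lambda>y. plane_wave \<tau> \<xi> y * (\<i> * complex_of_real (\<xi> \<bullet> v)))"
proof -
  have "dsp (\<lambda>y. plane_wave \<tau> \<xi> y *s cvec v) j y = plane_wave \<tau> \<xi> y *s ((\<i> * complex_of_real (\<xi> $ j)) *s cvec v)"
    for j y using dsp_plane_wave[of "\<lambda>_. cvec v"] by (simp add: pd3_const)
  then show ?thesis
    unfolding Xdiv_def by (auto intro!: ext simp: cvec_def inner_vec_def sum_3 algebra_simps)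
qed

lemma Xgrad_plane_wave_scalar:
  fixes f :: "real^3 \<Rightarrow> complex"
  assumes "f differentiable (at x)"
  shows "Xgrad (\<lambda>y. plane_wave \<tau> \<xi> y * f (snd y)) (t, x) = plane_wave \<tau> \<xi> (t, x) *s
    vector [pd3 f 1 x + (\<i> * complex_of_real (\<xi> $ 1)) * f x, pd3 f 2 x + (\<i> * complex_of_real (\<xi> $ 2)) * f x,
            pd3 f 3 x + (\<i> * complex_of_real (\<xi> $ 3)) * f x]"
  unfolding Xgrad_def using dsp_plane_wave_scalar[of f "(t, x)"] assms by (simp add: vector3_smult)

lemma Xcurl_plane_wave_real:
  assumes "\<And>x. W differentiable (at x)"
  shows "Xcurl (\<lambda>y. plane_wave \<tau> \<xi> y *s cvec (W (snd y)))
    = (\<lambda>y. plane_wave \<tau> \<xi> y *s (cvec (curl3 W (snd y)) + \<i> *s cvec (cross3 \<xi> (W (snd y)))))"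
proof
  fix y
  have "(\<lambda>y. plane_wave \<tau> \<xi> y *s cvec (W (snd y)))
      = (\<lambda>y. plane_wave \<tau> \<xi> y *s (cvec (W (snd y)) + \<i> *s cvec ((\<lambda>x. 0) (snd y))))"
    by (simp add: cvec_zero)
  then show "Xcurl (\<lambda>y. plane_wave \<tau> \<xi> y *s cvec (W (snd y))) y
      = plane_wave \<tau> \<xi> y *s (cvec (curl3 W (snd y)) + \<i> *s cvec (cross3 \<xi> (W (snd y))))"
    using Xcurl_plane_wave[of W y "\<lambda>x. 0" \<tau> \<xi>] assms by (simp add: curl3_zero cvec_def vec_eq_iff)
qed

lemma Xcurl_snd:
  assumes "\<And>x. H differentiable (at x)"
  shows "Xcurl (\<lambda>y. cvec (H (snd y))) w = cvec (curl3 H (snd w))"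
  unfolding Xcurl_def curl3_def using dsp_snd[of "\<lambda>x. cvec (H x)" w] differentiable_cvec[OF assms] pd3_cvec[OF assms]
  by (simp add: cvec_def vec_eq_iff forall_3)

lemma Pop_plane_wave:
  assumes hH: "\<And>x. H differentiable (at x)" and hH2: "\<And>m. pd3 H m differentiable (at x)"
    and hp: "pr differentiable (at x)" and hp2: "\<And>m. pd3 pr m differentiable (at x)"
  shows "Pop rho pr H gam (\<lambda>y. plane_wave \<tau> \<xi> y *s cvec v) (t, x) =
     plane_wave \<tau> \<xi> (t, x) *s (cvec (re_symbol rho pr H gam x \<tau> \<xi> v) + \<i> *s cvec (im_symbol rho pr H gam x \<tau> \<xi> v))"
proof -
  let ?e = "plane_wave \<tau> \<xi>"
  define f2 where "f2 = (\<lambda>x. complex_of_real (pr x) * (\<i> * complex_of_real (\<xi> \<bullet> v)))"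
  define f3 where "f3 = (\<lambda>x. complex_of_real (v \<bullet> grad3 pr x))"
  define W where "W = (\<lambda>x. cross3 v (H x))"
  have "(\<lambda>y. complex_of_real (pr (snd y)) * Xdiv (\<lambda>y. ?e y *s cvec v) y) = (\<lambda>y. ?e y * f2 (snd y))"
    unfolding Xdiv_plane_wave_const f2_def by (auto intro!: ext simp: mult_ac)
  moreover have "f2 differentiable (at x)"
    unfolding f2_def using hp by (intro derivative_intros differentiable_of_real)
  ultimately have T2: "Xgrad (\<lambda>y. complex_of_real (pr (snd y)) * Xdiv (\<lambda>y. ?e y *s cvec v) y) (t, x) = ?e (t, x) *s
    vector [pd3 f2 1 x + (\<i> * complex_of_real (\<xi> $ 1)) * f2 x, pd3 f2 2 x + (\<i> * complex_of_real (\<xi> $ 2)) * f2 x,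
            pd3 f2 3 x + (\<i> * complex_of_real (\<xi> $ 3)) * f2 x]"
    by (simp only: Xgrad_plane_wave_scalar)
  have pf2: "pd3 f2 j x = complex_of_real (pd3 pr j x) * (\<i> * complex_of_real (\<xi> \<bullet> v))" for j
    unfolding f2_def using pd3_of_real[OF hp]
      pd3_bounded_linear[OF bounded_linear_mult_left differentiable_of_real[OF hp]] by simp
  have "(\<lambda>y. cdot (?e y *s cvec v) (cvec (grad3 pr (snd y)))) = (\<lambda>y. ?e y * f3 (snd y))"
    unfolding f3_def by (auto intro!: ext simp: cdot_smult_left cdot_cvec)
  moreover have g3: "grad3 pr differentiable (at x)"
    unfolding grad3_def using hp2 by (intro differentiable_vector3) auto
  then have "f3 differentiable (at x)"
    unfolding f3_def by (intro differentiable_of_real differentiable_bounded_linear[OF bounded_linear_inner_right])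
  ultimately have T3: "Xgrad (\<lambda>y. cdot (?e y *s cvec v) (cvec (grad3 pr (snd y)))) (t, x) = ?e (t, x) *s
    vector [pd3 f3 1 x + (\<i> * complex_of_real (\<xi> $ 1)) * f3 x, pd3 f3 2 x + (\<i> * complex_of_real (\<xi> $ 2)) * f3 x,
            pd3 f3 3 x + (\<i> * complex_of_real (\<xi> $ 3)) * f3 x]"
    by (simp only: Xgrad_plane_wave_scalar)
  have pf3: "pd3 f3 j x = complex_of_real (v \<bullet> pd3 (grad3 pr) j x)" for j
    unfolding f3_def pd3_of_real[OF differentiable_bounded_linear[OF bounded_linear_inner_right g3]]
      pd3_bounded_linear[OF bounded_linear_inner_right g3] ..
  have dW: "W differentiable (at x')" for x'
    unfolding W_def by (rule differentiable_bounded_linear[OF bounded_linear_cross3_right hH])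
  then have C1: "Xcurl (\<lambda>y. ccross (?e y *s cvec v) (cvec (H (snd y))))
      = (\<lambda>y. ?e y *s (cvec (curl3 W (snd y)) + \<i> *s cvec (cross3 \<xi> (W (snd y)))))"
    using Xcurl_plane_wave_real[of W] unfolding W_def by (simp add: ccross_smult_left ccross_cvec)
  have "curl3 W differentiable (at x)"
    unfolding curl3_def W_def pd3_bounded_linear[OF bounded_linear_cross3_right hH] using hH2
    by (intro differentiable_vector3 derivative_intros differentiable_vec_nth
        differentiable_bounded_linear[OF bounded_linear_cross3_right]) auto
  then have C2: "Xcurl (Xcurl (\<lambda>y. ccross (?e y *s cvec v) (cvec (H (snd y))))) (t, x)
      = ?e (t, x) *s (cvec (curl3 (curl3 W) x) + \<i> *s cvec (curl3 (\<lambda>x. cross3 \<xi> (W x)) x)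
          + \<i> *s cvec (cross3 \<xi> (curl3 W x)) - cvec (cross3 \<xi> (cross3 \<xi> (W x))))"
    using Xcurl_plane_wave[of "curl3 W" "(t, x)" "\<lambda>x. cross3 \<xi> (W x)" \<tau> \<xi>]
      differentiable_bounded_linear[OF bounded_linear_cross3_right dW] unfolding C1 by simp
  show ?thesis
    unfolding Pop_def dtm_dtm_plane_wave_const T2 T3 C2 Xcurl_snd[OF hH]
    unfolding C1 snd_conv pf2 pf3 re_symbol_def im_symbol_def
    unfolding f2_def f3_def W_def
    by (rule Pop_plane_wave_algebra) (simp add: grad3_def)
qed

lemma full_symbol_eq:
  fixes rho pr :: "real^3 \<Rightarrow> real" and H :: "real^3 \<Rightarrow> real^3"
  assumes hH: "\<And>x. H differentiable (at x)" and hH2: "\<And>m. pd3 H m differentiable (at x)"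
    and hp: "pr differentiable (at x)" and hp2: "\<And>m. pd3 pr m differentiable (at x)"
  shows "full_symbol rho pr H gam (t, x, \<tau>, \<xi>) =
    (\<chi> i k. (cvec (re_symbol rho pr H gam x \<tau> \<xi> (axis k 1)) + \<i> *s cvec (im_symbol rho pr H gam x \<tau> \<xi> (axis k 1))) $ i)"
proof -
  have b: "(\<lambda>y. exp (\<i> * complex_of_real (fst y * \<tau> + snd y \<bullet> \<xi>)) *s cvec (axis k 1)) = (\<lambda>y. plane_wave \<tau> \<xi> y *s cvec (axis k 1))" for k
    unfolding plane_wave_def ..
  have e: "exp (- \<i> * complex_of_real (t * \<tau> + x \<bullet> \<xi>)) * plane_wave \<tau> \<xi> (t, x) = 1"
    unfolding plane_wave_def by (simp add: exp_minus[symmetric] exp_add[symmetric])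
  have fs: "full_symbol rho pr H gam (t, x, \<tau>, \<xi>) = (\<chi> i k. (exp (- \<i> * complex_of_real (t * \<tau> + x \<bullet> \<xi>)) *s
      Pop rho pr H gam (\<lambda>y. plane_wave \<tau> \<xi> y *s cvec (axis k 1)) (t, x)) $ i)"
    unfolding full_symbol_def plane_wave_def by simp
  show ?thesis unfolding fs Pop_plane_wave[OF hH hH2 hp hp2] vector_smult_assoc e
    by simp
qed

lemma curl3_scaleR:
  assumes "F differentiable (at x)"
  shows "curl3 (\<lambda>x. s *\<^sub>R F x) x = s *\<^sub>R curl3 F x"
proof -
  have "pd3 (\<lambda>x. s *\<^sub>R F x) m x = s *\<^sub>R pd3 F m x" for m
    using pd3_bounded_linear[OF bounded_linear_scaleR_right assms] .
  then show ?thesis unfolding curl3_def by (simp add: vec_eq_iff forall_3 right_diff_distrib)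
qed

lemma im_symbol_homogeneous:
  assumes hH: "\<And>x. H differentiable (at x)"
  shows "im_symbol rho pr H gam x (s * \<tau>) (s *\<^sub>R \<xi>) v = s *\<^sub>R im_symbol rho pr H gam x \<tau> \<xi> v"
proof -
  have d: "(\<lambda>x. cross3 \<xi> (cross3 v (H x))) differentiable (at x)"
    by (intro differentiable_bounded_linear[OF bounded_linear_cross3_right] hH)
  have "curl3 (\<lambda>x. cross3 (s *\<^sub>R \<xi>) (cross3 v (H x))) x = s *\<^sub>R curl3 (\<lambda>x. cross3 \<xi> (cross3 v (H x))) x"
    unfolding cross_mult_left by (rule curl3_scaleR[OF d])
  then show ?thesis unfolding im_symbol_def im_symbol_expr_def
    by (simp add: cross_mult_left cross_mult_right cross_add_left cross_add_right scaleR_add_right algebra_simps)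
qed

lemma re_symbol_split:
  "re_symbol rho pr H gam x \<tau> \<xi> v = re_symbol rho pr H gam x 0 0 v + p2 rho pr H gam (t, x, \<tau>, \<xi>) *v v"
  unfolding re_symbol_def re_symbol_expr_def p2_def power2_norm_eq_inner
  by (simp add: inner_vec_def vec_eq_iff forall_3 cross3_simps tens_def mat_def matrix_vector_mult_def sum_3 power2_eq_square algebra_simps)

lemma p2_homogeneous: "p2 rho pr H gam (t, x, s * \<tau>, s *\<^sub>R \<xi>) = s\<^sup>2 *\<^sub>R p2 rho pr H gam (t, x, \<tau>, \<xi>)"
  unfolding p2_def by (simp add: tens_linear algebra_simps power2_eq_square)

text \<open>Comparing the full symbol at \<open>(\<tau>, \<xi>)\<close> and \<open>(2\<tau>, 2\<xi>)\<close> separates its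
  homogeneous parts.\<close>

lemma p1_eq_im_symbol:
  fixes rho pr :: "real^3 \<Rightarrow> real" and H :: "real^3 \<Rightarrow> real^3" and p1 p0 :: "pt \<Rightarrow> complex^3^3"
  assumes hH: "\<And>x. H differentiable (at x)" and hH2: "\<And>m. pd3 H m differentiable (at x)"
    and hp: "pr differentiable (at x)" and hp2: "\<And>m. pd3 pr m differentiable (at x)"
    and symbol: "\<forall>z. full_symbol rho pr H gam z = cmat (p2 rho pr H gam z) + p1 z + p0 z"
    and homog: "\<forall>t x \<tau> \<xi> s. s > 0 \<longrightarrow>
        p1 (t, x, s * \<tau>, s *\<^sub>R \<xi>) = s *\<^sub>R p1 (t, x, \<tau>, \<xi>) \<and>
        p0 (t, x, s * \<tau>, s *\<^sub>R \<xi>) = p0 (t, x, \<tau>, \<xi>)"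
  shows "p1 (t, x, \<tau>, \<xi>) = (\<chi> i k. \<i> * complex_of_real (im_symbol rho pr H gam x \<tau> \<xi> (axis k 1) $ i))"
proof -
  let ?z = "(t, x, \<tau>, \<xi>)" and ?z2 = "(t, x, 2 * \<tau>, (2::real) *\<^sub>R \<xi>)"
  note FS = full_symbol_eq[OF hH hH2 hp hp2]
  have h2: "p1 ?z2 = 2 *\<^sub>R p1 ?z" "p0 ?z2 = p0 ?z" using homog by auto
  have P2: "p2 rho pr H gam ?z2 = 4 *\<^sub>R p2 rho pr H gam ?z" using p2_homogeneous[of rho pr H gam t x 2 \<tau> \<xi>] by simp
  have FI: "im_symbol rho pr H gam x (2 * \<tau>) (2 *\<^sub>R \<xi>) v = 2 *\<^sub>R im_symbol rho pr H gam x \<tau> \<xi> v" for v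
    using im_symbol_homogeneous[OF hH] .
  have mv: "(M *v axis k 1) $ i = M $ i $ k" for M :: "real^3^3" and i k
    by (simp add: matrix_vector_mult_def axis_def if_distrib cong: if_cong)
  show ?thesis
  proof (subst vec_eq_iff, intro allI, subst vec_eq_iff, intro allI)
    fix i k
    let ?R0 = "complex_of_real (re_symbol rho pr H gam x 0 0 (axis k 1) $ i)"
    let ?P = "complex_of_real (p2 rho pr H gam ?z $ i $ k)"
    let ?F = "complex_of_real (im_symbol rho pr H gam x \<tau> \<xi> (axis k 1) $ i)"
    have a1: "full_symbol rho pr H gam ?z $ i $ k = ?R0 + ?P + \<i> * ?F"
      unfolding FS re_symbol_split[of _ _ _ _ _ \<tau> \<xi> _ t] by (simp add: cvec_def mv)
    have a2: "full_symbol rho pr H gam ?z2 $ i $ k = ?R0 + 4 * ?P + 2 * (\<i> * ?F)"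
      unfolding FS re_symbol_split[of _ _ _ _ _ "2 * \<tau>" "2 *\<^sub>R \<xi>" _ t] FI P2 by (simp add: cvec_def mv)
    have b1: "full_symbol rho pr H gam ?z $ i $ k = ?P + p1 ?z $ i $ k + p0 ?z $ i $ k"
      using symbol by (simp add: cmat_def)
    have b2: "full_symbol rho pr H gam ?z2 $ i $ k = 4 * ?P + 2 * p1 ?z $ i $ k + p0 ?z $ i $ k"
    proof -
      have "full_symbol rho pr H gam ?z2 = cmat (p2 rho pr H gam ?z2) + p1 ?z2 + p0 ?z2" using symbol by blast
      then have "full_symbol rho pr H gam ?z2 = cmat (4 *\<^sub>R p2 rho pr H gam ?z) + 2 *\<^sub>R p1 ?z + p0 ?z"
        unfolding h2 P2 .
      then show ?thesis by (simp add: cmat_def scaleR_conv_of_real)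
    qed
    have "p1 ?z $ i $ k = (full_symbol rho pr H gam ?z2 $ i $ k - full_symbol rho pr H gam ?z $ i $ k) - 3 * ?P"
      unfolding b1 b2 by (simp add: algebra_simps)
    also have "\<dots> = \<i> * ?F" unfolding a1 a2 by (simp add: algebra_simps)
    finally show "p1 ?z $ i $ k = (\<chi> i k. \<i> * complex_of_real (im_symbol rho pr H gam x \<tau> \<xi> (axis k 1) $ i)) $ i $ k"
      by simp
  qed
qed

section \<open>Antisymmetry of the subprincipal symbol\<close>

lemma p2_fun_eq: "p2 rho pr H gam = (\<lambda>w.
     (rho (fst (snd w)) * (fst (snd (snd w)))\<^sup>2 - (H (fst (snd w)) \<bullet> snd (snd (snd w)))\<^sup>2) *\<^sub>R mat 1
     - (gam * pr (fst (snd w)) + H (fst (snd w)) \<bullet> H (fst (snd w))) *\<^sub>R tens (snd (snd (snd w))) (snd (snd (snd w)))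
     + (H (fst (snd w)) \<bullet> snd (snd (snd w))) *\<^sub>R (tens (snd (snd (snd w))) (H (fst (snd w))) + tens (H (fst (snd w))) (snd (snd (snd w)))))"
  by (auto intro!: ext simp: p2_def power2_norm_eq_inner split: prod.splits)

lemma has_derivative_base_point:
  assumes "(f has_derivative Df) (at x)"
  shows "((\<lambda>w::pt. f (fst (snd w))) has_derivative (\<lambda>h. Df (fst (snd h)))) (at (t, x, \<tau>, \<xi>))"
proof -
  have g: "((\<lambda>w::pt. fst (snd w)) has_derivative (\<lambda>h. fst (snd h))) (at (t, x, \<tau>, \<xi>))"
    by (intro derivative_intros)
  show ?thesis using has_derivative_compose[OF g, of f Df] assms by simp
qed

lemma p2_has_derivative:
  assumes r: "(rho has_derivative Dr) (at x)" and p: "(pr has_derivative Dp) (at x)" and h: "(H has_derivative DH) (at x)"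
  shows "(p2 rho pr H gam has_derivative (\<lambda>hh. case hh of (h1, hx, h\<tau>, h\<xi>) \<Rightarrow>
      (Dr hx * \<tau>\<^sup>2 + rho x * (2 * \<tau> * h\<tau>) - 2 * (H x \<bullet> \<xi>) * (DH hx \<bullet> \<xi> + H x \<bullet> h\<xi>)) *\<^sub>R mat 1
      - (gam * Dp hx + 2 * (H x \<bullet> DH hx)) *\<^sub>R tens \<xi> \<xi>
      - (gam * pr x + H x \<bullet> H x) *\<^sub>R (tens h\<xi> \<xi> + tens \<xi> h\<xi>)
      + (DH hx \<bullet> \<xi> + H x \<bullet> h\<xi>) *\<^sub>R (tens \<xi> (H x) + tens (H x) \<xi>)
      + (H x \<bullet> \<xi>) *\<^sub>R (tens h\<xi> (H x) + tens \<xi> (DH hx) + tens (DH hx) \<xi> + tens (H x) h\<xi>))) (at (t, x, \<tau>, \<xi>))"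
proof -
  have r': "((\<lambda>w. rho (fst (snd w))) has_derivative (\<lambda>h. Dr (fst (snd h)))) (at (t, x, \<tau>, \<xi>))"
    by (rule has_derivative_base_point[OF r])
  have p': "((\<lambda>w. pr (fst (snd w))) has_derivative (\<lambda>h. Dp (fst (snd h)))) (at (t, x, \<tau>, \<xi>))"
    by (rule has_derivative_base_point[OF p])
  have h': "((\<lambda>w. H (fst (snd w))) has_derivative (\<lambda>h. DH (fst (snd h)))) (at (t, x, \<tau>, \<xi>))"
    by (rule has_derivative_base_point[OF h])
  show ?thesis unfolding p2_fun_eq
    by (rule has_derivative_eq_rhs, (rule r' p' h' derivative_intros)+)
      (auto intro!: ext split: prod.splits; simp add: algebra_simps tens_linear inner_commute power2_eq_square
        scaleR_add_right scaleR_diff_right scaleR_add_left scaleR_diff_left)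
qed

definition p2_xi_derivative :: "(real^3 \<Rightarrow> real) \<Rightarrow> (real^3 \<Rightarrow> real^3) \<Rightarrow> real \<Rightarrow> 3 \<Rightarrow> real^3 \<Rightarrow> real^3 \<Rightarrow> real^3^3" where
  "p2_xi_derivative pr H gam j x \<xi> = (- 2 * (H x \<bullet> \<xi>) * (H x $ j)) *\<^sub>R mat 1
     - (gam * pr x + H x \<bullet> H x) *\<^sub>R (tens (axis j 1) \<xi> + tens \<xi> (axis j 1))
     + (H x $ j) *\<^sub>R (tens \<xi> (H x) + tens (H x) \<xi>)
     + (H x \<bullet> \<xi>) *\<^sub>R (tens (axis j 1) (H x) + tens (H x) (axis j 1))"

lemma dXi_p2:
  assumes r: "rho differentiable (at x)" and p: "pr differentiable (at x)" and h: "H differentiable (at x)"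
  shows "dXi (p2 rho pr H gam) j (t, x, \<tau>, \<xi>) = p2_xi_derivative pr H gam j x \<xi>"
proof -
  obtain Dr Dp DH where r: "(rho has_derivative Dr) (at x)" and p: "(pr has_derivative Dp) (at x)"
    and h: "(H has_derivative DH) (at x)" using r p h unfolding differentiable_def by blast
  have l: "Dr 0 = 0" "Dp 0 = 0" "DH 0 = 0" using r p h has_derivative_linear linear_0 by blast+
  show ?thesis unfolding dXi_def dir_deriv_has_derivative[OF p2_has_derivative[OF r p h]] p2_xi_derivative_def
    by (simp add: l inner_axis_one inner_commute[of _ "axis j 1"] tens_linear algebra_simps)
qed

lemma p2_xi_derivative_has_derivative:
  fixes t \<tau> :: real
  assumes p: "(pr has_derivative Dp) (at x)" and h: "(H has_derivative DH) (at x)"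
  shows "((\<lambda>w. p2_xi_derivative pr H gam j (fst (snd w)) (snd (snd (snd w)))) has_derivative (\<lambda>hh. case hh of (h1, hx, h\<tau>, h\<xi>) \<Rightarrow>
      (- 2 * (DH hx \<bullet> \<xi> + H x \<bullet> h\<xi>) * (H x $ j) - 2 * (H x \<bullet> \<xi>) * (DH hx $ j)) *\<^sub>R mat 1
     - (gam * Dp hx + 2 * (H x \<bullet> DH hx)) *\<^sub>R (tens (axis j 1) \<xi> + tens \<xi> (axis j 1))
     - (gam * pr x + H x \<bullet> H x) *\<^sub>R (tens (axis j 1) h\<xi> + tens h\<xi> (axis j 1))
     + (DH hx $ j) *\<^sub>R (tens \<xi> (H x) + tens (H x) \<xi>)
     + (H x $ j) *\<^sub>R (tens h\<xi> (H x) + tens \<xi> (DH hx) + tens (DH hx) \<xi> + tens (H x) h\<xi>)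
     + (DH hx \<bullet> \<xi> + H x \<bullet> h\<xi>) *\<^sub>R (tens (axis j 1) (H x) + tens (H x) (axis j 1))
     + (H x \<bullet> \<xi>) *\<^sub>R (tens (axis j 1) (DH hx) + tens (DH hx) (axis j 1)))) (at (t, x, \<tau>, \<xi>))"
proof -
  have p': "((\<lambda>w. pr (fst (snd w))) has_derivative (\<lambda>h. Dp (fst (snd h)))) (at (t, x, \<tau>, \<xi>))"
    by (rule has_derivative_base_point[OF p])
  have h': "((\<lambda>w. H (fst (snd w))) has_derivative (\<lambda>h. DH (fst (snd h)))) (at (t, x, \<tau>, \<xi>))"
    by (rule has_derivative_base_point[OF h])
  have hj: "((\<lambda>w. H (fst (snd w)) $ j) has_derivative (\<lambda>h. DH (fst (snd h)) $ j)) (at (t, x, \<tau>, \<xi>))"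
    using bounded_linear.has_derivative[OF bounded_linear_vec_nth h'] .
  show ?thesis unfolding p2_xi_derivative_def
    by (rule has_derivative_eq_rhs, (rule hj p' h' derivative_intros)+)
      (auto intro!: ext split: prod.splits; simp add: algebra_simps tens_linear inner_commute
        scaleR_add_right scaleR_diff_right scaleR_add_left scaleR_diff_left)
qed

lemma dX_dXi_p2:
  assumes r: "\<And>x. rho differentiable (at x)" and p: "\<And>x. pr differentiable (at x)" and h: "\<And>x. H differentiable (at x)"
  shows "dX (\<lambda>w. dXi (p2 rho pr H gam) j w) j (t, x, \<tau>, \<xi>) =
      (- 2 * (pd3 H j x \<bullet> \<xi>) * (H x $ j) - 2 * (H x \<bullet> \<xi>) * (pd3 H j x $ j)) *\<^sub>R mat 1
     - (gam * pd3 pr j x + 2 * (H x \<bullet> pd3 H j x)) *\<^sub>R (tens (axis j 1) \<xi> + tens \<xi> (axis j 1))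
     + (pd3 H j x $ j) *\<^sub>R (tens \<xi> (H x) + tens (H x) \<xi>)
     + (H x $ j) *\<^sub>R (tens \<xi> (pd3 H j x) + tens (pd3 H j x) \<xi>)
     + (pd3 H j x \<bullet> \<xi>) *\<^sub>R (tens (axis j 1) (H x) + tens (H x) (axis j 1))
     + (H x \<bullet> \<xi>) *\<^sub>R (tens (axis j 1) (pd3 H j x) + tens (pd3 H j x) (axis j 1))"
proof -
  obtain Dp DH where p': "(pr has_derivative Dp) (at x)"
    and h': "(H has_derivative DH) (at x)" using p h unfolding differentiable_def by blast
  have fe: "(\<lambda>w. dXi (p2 rho pr H gam) j w) = (\<lambda>w. p2_xi_derivative pr H gam j (fst (snd w)) (snd (snd (snd w))))"
  proof
    fix w :: pt
    obtain a b c d where w: "w = (a, b, c, d)" by (cases w) auto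
    show "dXi (p2 rho pr H gam) j w = p2_xi_derivative pr H gam j (fst (snd w)) (snd (snd (snd w)))"
      unfolding w using dXi_p2[OF r p h] by simp
  qed
  have l: "DH 0 = 0" using h' has_derivative_linear linear_0 by blast
  show ?thesis unfolding fe dX_def dir_deriv_has_derivative[OF p2_xi_derivative_has_derivative[OF p' h']]
    by (simp add: pd3_has_derivative[OF p'] pd3_has_derivative[OF h'] l)
qed

text \<open>The imaginary part of the symbol and the mixed derivatives of \<open>p\<^sub>2\<close>, written in terms of
  \<open>g = \<nabla>p(x)\<close> and the partial derivatives \<open>D m = \<partial>\<^sub>m H(x)\<close> as free variables: under the
  equilibrium condition their combined antisymmetry is a polynomial identity.\<close>

definition curl_of_partials :: "(3 \<Rightarrow> real^3) \<Rightarrow> real^3" where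
  "curl_of_partials F = vector [F 2 $ 3 - F 3 $ 2, F 3 $ 1 - F 1 $ 3, F 1 $ 2 - F 2 $ 1]"

definition im_symbol_partials :: "real \<Rightarrow> real^3 \<Rightarrow> real^3 \<Rightarrow> real^3 \<Rightarrow> (3 \<Rightarrow> real^3) \<Rightarrow> real^3 \<Rightarrow> real^3" where
  "im_symbol_partials gam g \<xi> Hv D v = (gam * (\<xi> \<bullet> v)) *\<^sub>R g + (v \<bullet> g) *\<^sub>R \<xi>
     + cross3 (curl_of_partials (\<lambda>m. cross3 \<xi> (cross3 v (D m))) + cross3 \<xi> (curl_of_partials (\<lambda>m. cross3 v (D m)))) Hv
     + cross3 (curl_of_partials D) (cross3 \<xi> (cross3 v Hv))"

definition p2_mixed_derivative_partials :: "real \<Rightarrow> real^3 \<Rightarrow> real^3 \<Rightarrow> real^3 \<Rightarrow> (3 \<Rightarrow> real^3) \<Rightarrow> 3 \<Rightarrow> real^3^3" where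
  "p2_mixed_derivative_partials gam g \<xi> Hv D j = (- 2 * (D j \<bullet> \<xi>) * (Hv $ j) - 2 * (Hv \<bullet> \<xi>) * (D j $ j)) *\<^sub>R mat 1
     - (gam * g $ j + 2 * (Hv \<bullet> D j)) *\<^sub>R (tens (axis j 1) \<xi> + tens \<xi> (axis j 1))
     + (D j $ j) *\<^sub>R (tens \<xi> Hv + tens Hv \<xi>)
     + (Hv $ j) *\<^sub>R (tens \<xi> (D j) + tens (D j) \<xi>)
     + (D j \<bullet> \<xi>) *\<^sub>R (tens (axis j 1) Hv + tens Hv (axis j 1))
     + (Hv \<bullet> \<xi>) *\<^sub>R (tens (axis j 1) (D j) + tens (D j) (axis j 1))"

lemma im_symbol_mixed_derivative_antisym:
  assumes eq: "g = - cross3 Hv (curl_of_partials D)"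
  shows "im_symbol_partials gam g \<xi> Hv D (axis k 1) $ i + im_symbol_partials gam g \<xi> Hv D (axis i 1) $ k + (\<Sum>j\<in>UNIV. p2_mixed_derivative_partials gam g \<xi> Hv D j) $ i $ k = 0"
  using exhaust_3[of i] exhaust_3[of k]
  unfolding eq im_symbol_partials_def p2_mixed_derivative_partials_def curl_of_partials_def
  by (auto simp: sum_3 cross3_simps tens_def mat_def axis_def)

lemma im_symbol_eq_partials:
  assumes hH: "\<And>x. H differentiable (at x)"
  shows "im_symbol rho pr H gam x \<tau> \<xi> v = im_symbol_partials gam (grad3 pr x) \<xi> (H x) (\<lambda>m. pd3 H m x) v"
proof -
  have bl: "bounded_linear (\<lambda>w. cross3 \<xi> (cross3 v w))"
    using bounded_linear_compose[OF bounded_linear_cross3_right bounded_linear_cross3_right] by (simp add: o_def)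
  have c1: "curl3 (\<lambda>x. cross3 \<xi> (cross3 v (H x))) x = curl_of_partials (\<lambda>m. cross3 \<xi> (cross3 v (pd3 H m x)))"
    unfolding curl3_def curl_of_partials_def pd3_bounded_linear[OF bl hH] ..
  have c2: "curl3 (\<lambda>x. cross3 v (H x)) x = curl_of_partials (\<lambda>m. cross3 v (pd3 H m x))"
    unfolding curl3_def curl_of_partials_def pd3_bounded_linear[OF bounded_linear_cross3_right hH] ..
  have c3: "curl3 H x = curl_of_partials (\<lambda>m. pd3 H m x)" unfolding curl3_def curl_of_partials_def ..
  show ?thesis unfolding im_symbol_def im_symbol_expr_def im_symbol_partials_def c1 c2 c3 ..
qed

lemma grad3_nth: "grad3 pr x $ j = pd3 pr j x"
  using exhaust_3[of j] by (auto simp: grad3_def)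

lemma dX_dXi_p2_partials:
  assumes r: "\<And>x. rho differentiable (at x)" and p: "\<And>x. pr differentiable (at x)" and h: "\<And>x. H differentiable (at x)"
  shows "dX (\<lambda>w. dXi (p2 rho pr H gam) j w) j (t, x, \<tau>, \<xi>) = p2_mixed_derivative_partials gam (grad3 pr x) \<xi> (H x) (\<lambda>m. pd3 H m x) j"
  unfolding dX_dXi_p2[OF r p h] p2_mixed_derivative_partials_def grad3_nth ..

lemma subprincipal_antisymmetric:
  fixes rho pr :: "real^3 \<Rightarrow> real" and H :: "real^3 \<Rightarrow> real^3" and p1 p0 :: "pt \<Rightarrow> complex^3^3"
  assumes r: "\<And>x. rho differentiable (at x)" and p: "\<And>x. pr differentiable (at x)" and hH: "\<And>x. H differentiable (at x)"
    and hH2: "\<And>m. pd3 H m differentiable (at x)" and hp2: "\<And>m. pd3 pr m differentiable (at x)"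
    and symbol: "\<forall>z. full_symbol rho pr H gam z = cmat (p2 rho pr H gam z) + p1 z + p0 z"
    and homog: "\<forall>t x \<tau> \<xi> s. s > 0 \<longrightarrow>
        p1 (t, x, s * \<tau>, s *\<^sub>R \<xi>) = s *\<^sub>R p1 (t, x, \<tau>, \<xi>) \<and>
        p0 (t, x, s * \<tau>, s *\<^sub>R \<xi>) = p0 (t, x, \<tau>, \<xi>)"
    and eq: "grad3 pr x + cross3 (H x) (curl3 H x) = 0"
  shows "subprincipal rho pr H gam p1 (t, x, \<tau>, \<xi>) $ i $ k + subprincipal rho pr H gam p1 (t, x, \<tau>, \<xi>) $ k $ i = 0"
proof -
  let ?z = "(t, x, \<tau>, \<xi>)"
  note P1 = p1_eq_im_symbol[OF hH hH2 p hp2 symbol homog, of t \<tau> \<xi>]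
  let ?g = "grad3 pr x" and ?D = "\<lambda>m. pd3 H m x"
  have eqA: "?g = - cross3 (H x) (curl_of_partials ?D)"
    using eq unfolding curl3_def curl_of_partials_def by (simp add: eq_neg_iff_add_eq_0)
  define S where "S = (\<Sum>j\<in>UNIV. p2_mixed_derivative_partials gam ?g \<xi> (H x) ?D j)"
  have Seq: "(\<Sum>j\<in>UNIV. dX (\<lambda>w. dXi (p2 rho pr H gam) j w) j ?z) = S"
    unfolding S_def dX_dXi_p2_partials[OF r p hH] ..
  have A1: "im_symbol_partials gam ?g \<xi> (H x) ?D (axis k 1) $ i + im_symbol_partials gam ?g \<xi> (H x) ?D (axis i 1) $ k + S $ i $ k = 0"
    unfolding S_def by (rule im_symbol_mixed_derivative_antisym[OF eqA])
  have A2: "im_symbol_partials gam ?g \<xi> (H x) ?D (axis i 1) $ k + im_symbol_partials gam ?g \<xi> (H x) ?D (axis k 1) $ i + S $ k $ i = 0"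
    unfolding S_def by (rule im_symbol_mixed_derivative_antisym[OF eqA])
  have ea: "im_symbol_partials gam ?g \<xi> (H x) ?D (axis i 1) $ k = - S $ i $ k - im_symbol_partials gam ?g \<xi> (H x) ?D (axis k 1) $ i"
    using A1 by linarith
  have es: "S $ k $ i = S $ i $ k" using A1 A2 by linarith
  show ?thesis
    unfolding subprincipal_def Seq P1 im_symbol_eq_partials[OF hH]
    by (simp add: cscale_def cmat_def field_simps ea es)
qed

section \<open>Differentiability of the symbols\<close>

lemma differentiable_base_point:
  assumes "f differentiable (at x)"
  shows "(\<lambda>w::pt. f (fst (snd w))) differentiable (at (t, x, \<tau>, \<xi>))"
  using assms has_derivative_base_point unfolding differentiable_def by blast

lemma differentiable_xi: "(\<lambda>w::pt. snd (snd (snd w))) differentiable (at z)"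
  by (intro derivative_intros)

lemma differentiable_tau: "(\<lambda>w::pt. fst (snd (snd w))) differentiable (at z)"
  by (intro derivative_intros)

lemma fast_slow_differentiable:
  fixes rho pr :: "real^3 \<Rightarrow> real" and H :: "real^3 \<Rightarrow> real^3"
  assumes r: "rho differentiable (at x)" and p: "pr differentiable (at x)" and h: "H differentiable (at x)"
    and g: "nondegenerate rho pr H gam (t, x, \<tau>, \<xi>)"
  shows "(\<lambda>w::pt. fast_slow b rho pr H gam (fst (snd w)) (snd (snd (snd w)))) differentiable (at (t, x, \<tau>, \<xi>))"
proof -
  have r0: "rho x > 0" and c: "csq rho pr gam x > 0" and cr: "cross3 \<xi> (H x) \<noteq> 0"
    using g unfolding nondegenerate_def by auto
  have xi: "\<xi> \<noteq> 0" using cr by auto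
  note R = differentiable_base_point[OF r, of t \<tau> \<xi>] and P = differentiable_base_point[OF p, of t \<tau> \<xi>] and HH = differentiable_base_point[OF h, of t \<tau> \<xi>]
  note XI = differentiable_xi[of "(t, x, \<tau>, \<xi>)"]
  define c2 where "c2 = (\<lambda>w::pt. gam * pr (fst (snd w)) / rho (fst (snd w)))"
  define h2 where "h2 = (\<lambda>w::pt. (H (fst (snd w)) \<bullet> H (fst (snd w))) / rho (fst (snd w)))"
  define b2 where "b2 = (\<lambda>w::pt. (cross3 (snd (snd (snd w))) (H (fst (snd w))) \<bullet> cross3 (snd (snd (snd w))) (H (fst (snd w)))) / rho (fst (snd w)))"
  define n2 where "n2 = (\<lambda>w::pt. snd (snd (snd w)) \<bullet> snd (snd (snd w)))"
  define D where "D = (\<lambda>w. (c2 w - h2 w)\<^sup>2 * (n2 w)\<^sup>2 + 4 * b2 w * c2 w * n2 w)"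
  have fe: "(\<lambda>w::pt. fast_slow b rho pr H gam (fst (snd w)) (snd (snd (snd w))))
      = (\<lambda>w. (1/2) * ((c2 w + h2 w) * n2 w + (if b then sqrt (D w) else - sqrt (D w))))"
    unfolding fast_slow_def Let_def c2_def h2_def b2_def n2_def D_def csq_def power2_norm_eq_inner by simp
  have dc2: "c2 differentiable (at (t, x, \<tau>, \<xi>))" unfolding c2_def
    using R P r0 by (intro differentiable_divide differentiable_mult) auto
  have dh2: "h2 differentiable (at (t, x, \<tau>, \<xi>))" unfolding h2_def
    using R HH r0 by (intro differentiable_divide differentiable_inner) auto
  have db2: "b2 differentiable (at (t, x, \<tau>, \<xi>))" unfolding b2_def
    using R HH XI r0 by (intro differentiable_divide differentiable_inner differentiable_cross3) auto
  have dn2: "n2 differentiable (at (t, x, \<tau>, \<xi>))" unfolding n2_def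
    using XI by (intro differentiable_inner) auto
  have dD: "D differentiable (at (t, x, \<tau>, \<xi>))" unfolding D_def
    using dc2 dh2 db2 dn2 by (intro derivative_intros) auto
  have Dpos: "D (t, x, \<tau>, \<xi>) > 0"
  proof -
    have "c2 (t, x, \<tau>, \<xi>) > 0" using c unfolding c2_def csq_def by simp
    moreover have "b2 (t, x, \<tau>, \<xi>) > 0" using cr r0 unfolding b2_def by (simp add: inner_gt_zero_iff)
    moreover have "n2 (t, x, \<tau>, \<xi>) > 0" using xi unfolding n2_def by (simp add: inner_gt_zero_iff)
    ultimately show ?thesis unfolding D_def by (simp add: add_nonneg_pos)
  qed
  have dS: "(\<lambda>w. sqrt (D w)) differentiable (at (t, x, \<tau>, \<xi>))" by (rule differentiable_sqrt_pos[OF dD Dpos])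
  show ?thesis unfolding fe using dc2 dh2 dn2 dS by (cases b) (auto intro!: derivative_intros)
qed

lemma w2_differentiable:
  assumes "(\<lambda>w::pt. H (fst (snd w))) differentiable (at z)"
  shows "(\<lambda>w::pt. w2 H (fst (snd w)) (snd (snd (snd w)))) differentiable (at z)"
  unfolding w2_def power2_norm_eq_inner using assms differentiable_xi[of z]
  by (intro derivative_intros differentiable_tens differentiable_inner) auto

lemma qq_differentiable:
  assumes r: "\<And>x. rho differentiable (at x)" and p: "\<And>x. pr differentiable (at x)"
    and h: "\<And>x. H differentiable (at x)" and g: "nondegenerate rho pr H gam z" and k: "k \<in> {1,2,3}"
  shows "qq rho pr H gam k differentiable (at z)"
proof -
  obtain t x \<tau> \<xi> where z: "z = (t, x, \<tau>, \<xi>)" by (cases z) auto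
  note R = differentiable_base_point[OF r[of x], of t \<tau> \<xi>] and HH = differentiable_base_point[OF h[of x], of t \<tau> \<xi>]
  note FS = fast_slow_differentiable[OF r p h g[unfolded z]]
  have "qq rho pr H gam k = (\<lambda>w. if k = 1 then rho (fst (snd w)) * (fst (snd (snd w)))\<^sup>2 - (H (fst (snd w)) \<bullet> snd (snd (snd w)))\<^sup>2
      else if k = 2 then rho (fst (snd w)) * ((fst (snd (snd w)))\<^sup>2 - cs2 rho pr H gam (fst (snd w)) (snd (snd (snd w))))
      else rho (fst (snd w)) * ((fst (snd (snd w)))\<^sup>2 - cf2 rho pr H gam (fst (snd w)) (snd (snd (snd w)))))"
    by (auto intro!: ext simp: qq_def split: prod.splits)
  then show ?thesis unfolding z using k R HH differentiable_xi differentiable_tau FS[of True] FS[of False]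
    by (auto intro!: derivative_intros differentiable_inner)
qed

lemma ppi_differentiable:
  assumes r: "\<And>x. rho differentiable (at x)" and p: "\<And>x. pr differentiable (at x)"
    and h: "\<And>x. H differentiable (at x)" and g: "nondegenerate rho pr H gam z" and k: "k \<in> {1,2,3}"
  shows "ppi rho pr H gam k differentiable (at z)"
proof -
  obtain t x \<tau> \<xi> where z: "z = (t, x, \<tau>, \<xi>)" by (cases z) auto
  note R = differentiable_base_point[OF r[of x], of t \<tau> \<xi>] and P = differentiable_base_point[OF p[of x], of t \<tau> \<xi>]
    and HH = differentiable_base_point[OF h[of x], of t \<tau> \<xi>] and XI = differentiable_xi[of "(t, x, \<tau>, \<xi>)"]
  note FS = fast_slow_differentiable[OF r p h g[unfolded z]]
  note ND = nondegenerate_denominators[OF g[unfolded z]]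
  note W = w2_differentiable[OF HH]
  define hx where "hx = (\<lambda>w::pt. H (fst (snd w)) \<bullet> snd (snd (snd w)))"
  define cs where "cs = (\<lambda>w::pt. rho (fst (snd w)) * cs2 rho pr H gam (fst (snd w)) (snd (snd (snd w))))"
  define cf where "cf = (\<lambda>w::pt. rho (fst (snd w)) * cf2 rho pr H gam (fst (snd w)) (snd (snd (snd w))))"
  define B where "B = (\<lambda>w::pt. (gam * pr (fst (snd w)) + H (fst (snd w)) \<bullet> H (fst (snd w))) *\<^sub>R tens (snd (snd (snd w))) (snd (snd (snd w)))
                    - hx w *\<^sub>R (tens (snd (snd (snd w))) (H (fst (snd w))) + tens (H (fst (snd w))) (snd (snd (snd w)))))"
  define W2 where "W2 = (\<lambda>w::pt. w2 H (fst (snd w)) (snd (snd (snd w))))"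
  have dhx: "hx differentiable (at (t, x, \<tau>, \<xi>))" unfolding hx_def using HH XI by (intro differentiable_inner)
  have dcs: "cs differentiable (at (t, x, \<tau>, \<xi>))" unfolding cs_def using R FS[of False] by (intro derivative_intros)
  have dcf: "cf differentiable (at (t, x, \<tau>, \<xi>))" unfolding cf_def using R FS[of True] by (intro derivative_intros)
  have dB: "B differentiable (at (t, x, \<tau>, \<xi>))" unfolding B_def using P HH XI dhx
    by (intro derivative_intros differentiable_tens differentiable_inner) auto
  have dW: "W2 differentiable (at (t, x, \<tau>, \<xi>))" unfolding W2_def by (rule W)
  have pe: "ppi rho pr H gam k = (\<lambda>w. if k = 1 then mat 1 + (1 / ((hx w)\<^sup>2 - (H (fst (snd w)) \<bullet> H (fst (snd w))) * (snd (snd (snd w)) \<bullet> snd (snd (snd w))))) *\<^sub>R W2 w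
     else if k = 2 then (1 / (cs w - cf w)) *\<^sub>R (B w + ((hx w)\<^sup>2 / (cs w - (hx w)\<^sup>2)) *\<^sub>R W2 w)
     else (1 / (cf w - cs w)) *\<^sub>R (B w + ((hx w)\<^sup>2 / (cf w - (hx w)\<^sup>2)) *\<^sub>R W2 w))"
  proof
    fix w :: pt
    obtain a b c d where w: "w = (a, b, c, d)" by (cases w) auto
    show "ppi rho pr H gam k w = (if k = 1 then mat 1 + (1 / ((hx w)\<^sup>2 - (H (fst (snd w)) \<bullet> H (fst (snd w))) * (snd (snd (snd w)) \<bullet> snd (snd (snd w))))) *\<^sub>R W2 w
     else if k = 2 then (1 / (cs w - cf w)) *\<^sub>R (B w + ((hx w)\<^sup>2 / (cs w - (hx w)\<^sup>2)) *\<^sub>R W2 w)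
     else (1 / (cf w - cs w)) *\<^sub>R (B w + ((hx w)\<^sup>2 / (cf w - (hx w)\<^sup>2)) *\<^sub>R W2 w))"
      unfolding w hx_def cs_def cf_def B_def W2_def ppi_def Let_def power2_norm_eq_inner by simp
  qed
  have n1: "(hx (t, x, \<tau>, \<xi>))\<^sup>2 - (H x \<bullet> H x) * (\<xi> \<bullet> \<xi>) \<noteq> 0" using ND(4) unfolding hx_def power2_norm_eq_inner by simp
  have n2: "cs (t, x, \<tau>, \<xi>) - cf (t, x, \<tau>, \<xi>) \<noteq> 0" "cf (t, x, \<tau>, \<xi>) - cs (t, x, \<tau>, \<xi>) \<noteq> 0"
    using ND(1) unfolding cs_def cf_def by auto
  have n3: "cs (t, x, \<tau>, \<xi>) - (hx (t, x, \<tau>, \<xi>))\<^sup>2 \<noteq> 0" "cf (t, x, \<tau>, \<xi>) - (hx (t, x, \<tau>, \<xi>))\<^sup>2 \<noteq> 0"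
    using ND(2,3) unfolding cs_def cf_def hx_def by auto
  consider "k = 1" | "k = 2" | "k = 3" using k by auto
  then show ?thesis
  proof cases
    case 1
    show ?thesis unfolding pe z using 1 dhx HH XI dW n1
      by (auto intro!: derivative_intros differentiable_inner)
  next
    case 2
    show ?thesis unfolding pe z using 2 dhx dcs dcf dB dW n2 n3
      by (auto intro!: derivative_intros)
  next
    case 3
    show ?thesis unfolding pe z using 3 dhx dcs dcf dB dW n2 n3
      by (auto intro!: derivative_intros)
  qed
qed

lemma p2_differentiable:
  assumes "\<And>x. rho differentiable (at x)" "\<And>x. pr differentiable (at x)" "\<And>x. H differentiable (at x)"
  shows "p2 rho pr H gam differentiable (at z)"
proof -
  obtain t x \<tau> \<xi> where z: "z = (t, x, \<tau>, \<xi>)" by (cases z) auto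
  obtain Dr Dp DH where "(rho has_derivative Dr) (at x)" "(pr has_derivative Dp) (at x)" "(H has_derivative DH) (at x)"
    using assms unfolding differentiable_def by blast
  from p2_has_derivative[OF this] show ?thesis unfolding z differentiable_def by blast
qed

lemma open_admissible:
  assumes "\<And>x. H differentiable (at x)"
  shows "open {w::pt. admissible H w}"
proof -
  have "continuous_on UNIV H"
    using assms differentiable_imp_continuous_within continuous_on_eq_continuous_within by blast
  then have H: "continuous_on UNIV (\<lambda>w::pt. H (fst (snd w)))"
    by (intro continuous_on_compose2[OF \<open>continuous_on UNIV H\<close>] continuous_intros) auto
  have xi: "continuous_on UNIV (\<lambda>w::pt. snd (snd (snd w)))" by (intro continuous_intros)
  have "{w::pt. admissible H w} = {w. snd (snd (snd w)) \<bullet> H (fst (snd w)) \<noteq> 0}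
      \<inter> {w. cross3 (snd (snd (snd w))) (H (fst (snd w))) \<noteq> 0}"
    by (auto simp: admissible_def split: prod.splits)
  then show ?thesis
    by (simp only:) (intro open_Int open_Collect_neq continuous_intros continuous_on_cross H xi)
qed

section \<open>The bracket term\<close>

text \<open>In the application, at a point with \<open>q\<^sub>j = 0\<close>: \<open>P = \<pi>\<^sub>j\<close>, \<open>M = p\<^sub>2\<close>,
  \<open>R = ppi_complement_inverse\<close> (so that the derivative of \<open>ptil = \<pi>\<^sub>j + q\<^sub>j R\<close> is
  \<open>D + q\<^sub>e R\<close>), \<open>D, E\<close> and \<open>M\<^sub>e, M\<^sub>f\<close> are the derivatives of \<open>\<pi>\<^sub>j\<close> and \<open>p\<^sub>2\<close>
  in two directions \<open>e, f\<close>, and \<open>q\<^sub>e, q\<^sub>f\<close> those of \<open>q\<^sub>j\<close>.\<close>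

lemma projector_bracket_identity:
  fixes P M R D E Me Mf :: "real^'n^'n" and qe qf :: real
  assumes MP: "M ** P = 0" and PM: "P ** M = 0" and RM: "R ** M = mat 1 - P" and RP: "R ** P = 0"
    and DP: "D ** P + P ** D = D" and EP: "E ** P + P ** E = E"
    and MeP: "Me ** P = qe *\<^sub>R P - M ** D" and MfP: "Mf ** P = qf *\<^sub>R P - M ** E"
    and sym: "transpose M = M" "transpose D = D" "transpose E = E"
    and rank_one: "\<And>X. transpose X = - X \<Longrightarrow> P ** X ** P = 0"
  shows "((E + qf *\<^sub>R R) ** Me - (D + qe *\<^sub>R R) ** Mf) ** P = 2 *\<^sub>R ((qe *\<^sub>R E - qf *\<^sub>R D) ** P)"
proof -
  have compl: "P ** D = D - D ** P" "P ** E = E - E ** P"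
    using DP EP by (simp_all add: algebra_simps)
  have L1: "(E + qf *\<^sub>R R) ** Me ** P = qe *\<^sub>R (E ** P) - qf *\<^sub>R (D ** P) - E ** M ** D"
    unfolding matrix_mul_assoc[symmetric] MeP
    by (simp add: matrix_distribs matrix_mul_assoc RP RM compl algebra_simps)
  have L2: "(D + qe *\<^sub>R R) ** Mf ** P = qf *\<^sub>R (D ** P) - qe *\<^sub>R (E ** P) - D ** M ** E"
    unfolding matrix_mul_assoc[symmetric] MfP
    by (simp add: matrix_distribs matrix_mul_assoc RP RM compl algebra_simps)
  have EMD: "E ** M ** D = D ** M ** E"
  proof -
    define Y where "Y = E ** M ** D - D ** M ** E"
    have "M ** (P ** D) = 0" "M ** (P ** E) = 0" by (simp_all add: matrix_mul_assoc MP)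
    then have "M ** D ** P = M ** D" "M ** E ** P = M ** E"
      unfolding compl by (simp_all add: matrix_diff_ldistrib matrix_mul_assoc)
    then have YP: "Y ** P = Y" unfolding Y_def by (simp add: matrix_diff_rdistrib matrix_mul_assoc[symmetric])
    have "P ** E ** M = E ** M" "P ** D ** M = D ** M"
      unfolding compl by (simp_all add: matrix_diff_rdistrib matrix_mul_assoc[symmetric] PM)
    then have PY: "P ** Y = Y" unfolding Y_def by (simp add: matrix_diff_ldistrib matrix_mul_assoc)
    have "transpose Y = - Y"
      unfolding Y_def by (simp add: transpose_diff matrix_transpose_mul sym matrix_mul_assoc)
    then have "P ** Y ** P = 0" by (rule rank_one)
    then have "Y = 0" by (simp only: PY YP)
    then show ?thesis unfolding Y_def by simp
  qed
  have "((E + qf *\<^sub>R R) ** Me - (D + qe *\<^sub>R R) ** Mf) ** P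
      = (E + qf *\<^sub>R R) ** Me ** P - (D + qe *\<^sub>R R) ** Mf ** P"
    by (rule matrix_diff_rdistrib)
  also have "\<dots> = (qe *\<^sub>R (E ** P) - qf *\<^sub>R (D ** P)) + (qe *\<^sub>R (E ** P) - qf *\<^sub>R (D ** P))"
    unfolding L1 L2 EMD by (simp add: algebra_simps)
  also have "\<dots> = 2 *\<^sub>R ((qe *\<^sub>R E - qf *\<^sub>R D) ** P)"
    by (simp only: scaleR_2 matrix_diff_rdistrib scalar_matrix_assoc)
  finally show ?thesis .
qed

text \<open>Obtained by differentiating \<open>\<pi>\<^sub>j\<^sup>2 = \<pi>\<^sub>j\<close>, \<open>\<pi>\<^sub>j\<^sup>T = \<pi>\<^sub>j\<close> and
  \<open>p\<^sub>2 \<pi>\<^sub>j = q\<^sub>j \<pi>\<^sub>j\<close>, which hold on the open set of admissible points.\<close>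

lemma ppi_derivative_identities:
  fixes v :: pt
  assumes r: "\<And>x. rho differentiable (at x)" and p: "\<And>x. pr differentiable (at x)"
    and h: "\<And>x. H differentiable (at x)" and rpos: "\<forall>x. rho x > 0" and cpos: "\<forall>x. csq rho pr gam x > 0"
    and adm: "admissible H z" and j: "j \<in> {1, 2, 3}"
  defines "P \<equiv> ppi rho pr H gam j z" and "D \<equiv> frechet_derivative (ppi rho pr H gam j) (at z) v"
  shows "D ** P + P ** D = D" and "transpose D = D"
    and "frechet_derivative (p2 rho pr H gam) (at z) v ** P + p2 rho pr H gam z ** D
      = frechet_derivative (qq rho pr H gam j) (at z) v *\<^sub>R P + qq rho pr H gam j z *\<^sub>R D"
proof -
  define U where "U = {w::pt. admissible H w}"
  have U: "open U" "z \<in> U" unfolding U_def using open_admissible[OF h] adm by auto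
  have g: "nondegenerate rho pr H gam w" if "w \<in> U" for w
    using nondegenerateI[OF rpos cpos] that unfolding U_def by simp
  note dP = ppi_differentiable[OF r p h g[OF U(2)] j]
  note dq = qq_differentiable[OF r p h g[OF U(2)] j]
  note d2 = p2_differentiable[OF r p h, of gam z]
  have "frechet_derivative (\<lambda>w. ppi rho pr H gam j w ** ppi rho pr H gam j w) (at z)
      = frechet_derivative (ppi rho pr H gam j) (at z)"
    using ppi_mult[OF g j j] by (intro frechet_derivative_eq_on_open[OF U _ dP]) simp
  from fun_cong[OF this, of v]
  show "D ** P + P ** D = D"
    unfolding D_def P_def frechet_derivative_bounded_bilinear[OF bounded_bilinear_matrix_mult dP dP]
    by (simp add: add.commute)
  have "frechet_derivative (\<lambda>w. transpose (ppi rho pr H gam j w)) (at z)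
      = frechet_derivative (ppi rho pr H gam j) (at z)"
    using ppi_symmetric[OF g j] by (intro frechet_derivative_eq_on_open[OF U _ dP]) simp
  from fun_cong[OF this, of v]
  show "transpose D = D"
    unfolding D_def frechet_derivative_bounded_linear[OF bounded_linear_transpose dP] by simp
  have "frechet_derivative (\<lambda>w. p2 rho pr H gam w ** ppi rho pr H gam j w) (at z)
      = frechet_derivative (\<lambda>w. qq rho pr H gam j w *\<^sub>R ppi rho pr H gam j w) (at z)"
    using p2_mult_ppi[OF g j] dq dP
    by (intro frechet_derivative_eq_on_open[OF U]) (auto intro: differentiable_scaleR)
  from fun_cong[OF this, of v]
  show "frechet_derivative (p2 rho pr H gam) (at z) v ** P + p2 rho pr H gam z ** D
      = frechet_derivative (qq rho pr H gam j) (at z) v *\<^sub>R P + qq rho pr H gam j z *\<^sub>R D"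
    unfolding D_def P_def frechet_derivative_bounded_bilinear[OF bounded_bilinear_matrix_mult d2 dP]
      frechet_derivative_bounded_bilinear[OF bounded_bilinear_scaleR dq dP]
    by (simp add: add.commute)
qed

lemma ptil_has_derivative:
  assumes dP: "\<And>k. k \<in> {1,2,3} \<Longrightarrow> ppi rho pr H gam k differentiable (at z)"
    and dq: "\<And>k. k \<in> {1,2,3} \<Longrightarrow> qq rho pr H gam k differentiable (at z)"
    and j: "j \<in> {1,2,3}" and qj: "qq rho pr H gam j z = 0"
    and qk: "\<forall>k\<in>{1,2,3} - {j}. qq rho pr H gam k z \<noteq> 0"
  shows "(ptil rho pr H gam j has_derivative (\<lambda>v. frechet_derivative (ppi rho pr H gam j) (at z) v
      + frechet_derivative (qq rho pr H gam j) (at z) v *\<^sub>R ppi_complement_inverse rho pr H gam j z)) (at z)"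
proof -
  let ?DP = "\<lambda>k. frechet_derivative (ppi rho pr H gam k) (at z)"
  let ?Dq = "\<lambda>k. frechet_derivative (qq rho pr H gam k) (at z)"
  have hP: "(ppi rho pr H gam k has_derivative ?DP k) (at z)" if "k \<in> {1,2,3}" for k
    using dP[OF that] frechet_derivative_works by blast
  have hq: "(qq rho pr H gam k has_derivative ?Dq k) (at z)" if "k \<in> {1,2,3}" for k
    using dq[OF that] frechet_derivative_works by blast
  have "((\<lambda>w. (qq rho pr H gam j w / qq rho pr H gam k w) *\<^sub>R ppi rho pr H gam k w) has_derivative
      (\<lambda>v. (?Dq j v / qq rho pr H gam k z) *\<^sub>R ppi rho pr H gam k z)) (at z)" if k: "k \<in> {1,2,3} - {j}" for k
  proof -
    have k3: "k \<in> {1,2,3}" and "qq rho pr H gam k z \<noteq> 0" using k qk by auto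
    from has_derivative_scaleR[OF has_derivative_divide'[OF hq[OF j] hq[OF k3] this(2)] hP[OF k3]]
    show ?thesis using \<open>qq rho pr H gam k z \<noteq> 0\<close> unfolding qj by simp
  qed
  then have "(ptil rho pr H gam j has_derivative (\<lambda>v. ?DP j v
       + (\<Sum>k\<in>{1,2,3} - {j}. (?Dq j v / qq rho pr H gam k z) *\<^sub>R ppi rho pr H gam k z))) (at z)"
    unfolding ptil_def[abs_def] by (intro has_derivative_add[OF hP[OF j]] has_derivative_sum) auto
  then show ?thesis
    unfolding ppi_complement_inverse_def scaleR_sum_right by (simp add: divide_inverse mult.commute)
qed

lemma dX_dXi_frechet:
  assumes "F differentiable (at z)"
  shows "dX F i z = frechet_derivative F (at z) (0, axis i 1, 0, 0)"
    and "dXi F i z = frechet_derivative F (at z) (0, 0, 0, axis i 1)"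
  unfolding dX_def dXi_def using dir_deriv_frechet[OF assms] by simp_all

lemma directional_bracket_ptil_p2:
  fixes e f :: pt
  assumes r: "\<And>x. rho differentiable (at x)" and p: "\<And>x. pr differentiable (at x)"
    and h: "\<And>x. H differentiable (at x)" and rpos: "\<forall>x. rho x > 0" and cpos: "\<forall>x. csq rho pr gam x > 0"
    and adm: "admissible H z" and j: "j \<in> {1, 2, 3}" and qj: "qq rho pr H gam j z = 0"
    and qk: "\<forall>k\<in>{1,2,3} - {j}. qq rho pr H gam k z \<noteq> 0"
  defines "D \<equiv> frechet_derivative (ppi rho pr H gam j) (at z)"
    and "Dq \<equiv> frechet_derivative (qq rho pr H gam j) (at z)"
    and "Dp2 \<equiv> frechet_derivative (p2 rho pr H gam) (at z)"
    and "Dpt \<equiv> frechet_derivative (ptil rho pr H gam j) (at z)"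
    and "P \<equiv> ppi rho pr H gam j z"
  shows "(Dpt f ** Dp2 e - Dpt e ** Dp2 f) ** P = 2 *\<^sub>R ((Dq e *\<^sub>R D f - Dq f *\<^sub>R D e) ** P)"
proof -
  let ?M = "p2 rho pr H gam z" and ?R = "ppi_complement_inverse rho pr H gam j z"
  have g: "nondegenerate rho pr H gam z" by (rule nondegenerateI[OF rpos cpos adm])
  note DI = ppi_derivative_identities[OF r p h rpos cpos adm j, folded D_def P_def]
  have "(ptil rho pr H gam j has_derivative (\<lambda>v. D v + Dq v *\<^sub>R ?R)) (at z)"
    unfolding D_def Dq_def
    by (rule ptil_has_derivative[OF ppi_differentiable[OF r p h g] qq_differentiable[OF r p h g] j qj qk])
  from fun_cong[OF frechet_derivative_at[OF this]]
  have Dpt: "Dpt v = D v + Dq v *\<^sub>R ?R" for v unfolding Dpt_def by simp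
  have MP: "?M ** P = 0" using p2_mult_ppi[OF g j] qj unfolding P_def by simp
  have "P ** ?M = transpose (?M ** P)"
    unfolding P_def by (simp add: matrix_transpose_mul ppi_symmetric[OF g j] p2_symmetric)
  then have PM: "P ** ?M = 0" unfolding MP by (simp add: transpose_def vec_eq_iff)
  show ?thesis unfolding Dpt
  proof (rule projector_bracket_identity[OF MP PM ppi_complement_inverse_mult[OF g j qj qk, folded P_def]])
    show "D e ** P + P ** D e = D e" "D f ** P + P ** D f = D f" by (rule DI(1))+
    show "Dp2 e ** P = Dq e *\<^sub>R P - ?M ** D e" "Dp2 f ** P = Dq f *\<^sub>R P - ?M ** D f"
      using DI(3)[of e] DI(3)[of f] qj unfolding Dp2_def Dq_def by (simp_all add: algebra_simps)
    show "transpose ?M = ?M" "transpose (D e) = D e" "transpose (D f) = D f"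
      by (rule p2_symmetric DI(2))+
    show "P ** X ** P = 0" if "transpose X = - X" for X
      unfolding P_def ppi_rank_one(1)[OF g j] by (rule tens_sandwich_antisymmetric[OF that])
  qed
qed

lemma poisson_ptil_p2_mult_ppi:
  assumes r: "\<And>x. rho differentiable (at x)" and p: "\<And>x. pr differentiable (at x)"
    and h: "\<And>x. H differentiable (at x)" and rpos: "\<forall>x. rho x > 0" and cpos: "\<forall>x. csq rho pr gam x > 0"
    and adm: "admissible H (t, x, \<tau>, \<xi>)" and j: "j \<in> {1, 2, 3}"
    and qj: "qq rho pr H gam j (t, x, \<tau>, \<xi>) = 0"
    and qk: "\<forall>k\<in>{1,2,3} - {j}. qq rho pr H gam k (t, x, \<tau>, \<xi>) \<noteq> 0"
  shows "((1/2) *\<^sub>R poisson (ptil rho pr H gam j) (p2 rho pr H gam) (t, x, \<tau>, \<xi>)) ** ppi rho pr H gam j (t, x, \<tau>, \<xi>)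
     = - (hamil (qq rho pr H gam j) (ppi rho pr H gam j) (t, x, \<tau>, \<xi>) ** ppi rho pr H gam j (t, x, \<tau>, \<xi>))"
proof -
  define z where "z = (t, x, \<tau>, \<xi>)"
  let ?P = "ppi rho pr H gam j z"
  let ?D = "frechet_derivative (ppi rho pr H gam j) (at z)"
  let ?Dq = "frechet_derivative (qq rho pr H gam j) (at z)"
  let ?Dp2 = "frechet_derivative (p2 rho pr H gam) (at z)"
  let ?Dpt = "frechet_derivative (ptil rho pr H gam j) (at z)"
  have g: "nondegenerate rho pr H gam z" unfolding z_def by (rule nondegenerateI[OF rpos cpos adm])
  note dP = ppi_differentiable[OF r p h g j] and dq = qq_differentiable[OF r p h g j]
  have "(ptil rho pr H gam j has_derivative (\<lambda>v. ?D v + ?Dq v *\<^sub>R ppi_complement_inverse rho pr H gam j z)) (at z)"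
    using ptil_has_derivative[OF ppi_differentiable[OF r p h g] qq_differentiable[OF r p h g] j]
      qj qk unfolding z_def by blast
  then have dpt: "ptil rho pr H gam j differentiable (at z)" unfolding differentiable_def by blast
  define A where "A i = ?Dpt (0, 0, 0, axis i 1) ** ?Dp2 (0, axis i 1, 0, 0)
    - ?Dpt (0, axis i 1, 0, 0) ** ?Dp2 (0, 0, 0, axis i 1)" for i :: 3
  define B where "B i = ?Dq (0, 0, 0, axis i 1) *\<^sub>R ?D (0, axis i 1, 0, 0)
    - ?Dq (0, axis i 1, 0, 0) *\<^sub>R ?D (0, 0, 0, axis i 1)" for i :: 3
  have "dT (ppi rho pr H gam j) z = 0" unfolding z_def by (rule dT_time_independent) (simp add: ppi_def)
  moreover have "dT (qq rho pr H gam j) z = 0" unfolding z_def by (rule dT_time_independent) (simp add: qq_def)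
  moreover have "dT (p2 rho pr H gam) z = 0" unfolding z_def by (rule dT_time_independent) (simp add: p2_def)
  moreover have "dT (ptil rho pr H gam j) z = 0"
    unfolding z_def by (rule dT_time_independent) (simp add: ptil_def ppi_def qq_def)
  ultimately have "poisson (ptil rho pr H gam j) (p2 rho pr H gam) z = (\<Sum>i\<in>UNIV. A i)"
    and "hamil (qq rho pr H gam j) (ppi rho pr H gam j) z = (\<Sum>i\<in>UNIV. B i)"
    unfolding poisson_def hamil_def A_def B_def dX_dXi_frechet[OF dpt] dX_dXi_frechet[OF dP]
      dX_dXi_frechet[OF p2_differentiable[OF r p h]] dX_dXi_frechet[OF dq] by simp_all
  moreover have "A i ** ?P = - (2 *\<^sub>R (B i ** ?P))" for i
    unfolding A_def B_def directional_bracket_ptil_p2[OF r p h rpos cpos adm j qj qk, folded z_def]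
    by (simp add: matrix_diff_rdistrib algebra_simps)
  ultimately show ?thesis
    unfolding z_def[symmetric] sum_3 by (simp add: matrix_add_rdistrib scalar_matrix_assoc[symmetric] algebra_simps)
qed

section \<open>The transport operator on \<open>\<Lambda>\<close>\<close>

lemma kernel_p2_in_range_ppi:
  assumes g: "nondegenerate rho pr H gam z" and j: "j \<in> {1, 2, 3}" and qj: "qq rho pr H gam j z = 0"
    and qk: "\<forall>k\<in>{1,2,3} - {j}. qq rho pr H gam k z \<noteq> 0"
    and ker: "cmat (p2 rho pr H gam z) *v a = 0"
  shows "cmat (ppi rho pr H gam j z) *v a = a"
proof -
  let ?R = "ppi_complement_inverse rho pr H gam j z"
  have "cmat (?R ** p2 rho pr H gam z) *v a = 0"
    unfolding cmat_mult matrix_vector_mul_assoc[symmetric] ker by simp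
  then show ?thesis
    unfolding ppi_complement_inverse_mult(1)[OF g j qj qk] cmat_diff cmat_mat1
    by (simp add: matrix_vector_mult_diff_rdistrib)
qed

lemma transport_bracket_term:
  assumes "\<And>x. rho differentiable (at x)" "\<And>x. pr differentiable (at x)" "\<And>x. H differentiable (at x)"
    and "\<forall>x. rho x > 0" and "\<forall>x. csq rho pr gam x > 0" and "admissible H (t, x, \<tau>, \<xi>)"
    and "j \<in> {1, 2, 3}" and "qq rho pr H gam j (t, x, \<tau>, \<xi>) = 0"
    and "\<forall>k\<in>{1,2,3} - {j}. qq rho pr H gam k (t, x, \<tau>, \<xi>) \<noteq> 0"
    and range: "cmat (ppi rho pr H gam j (t, x, \<tau>, \<xi>)) *v a = a"
  shows "cmat ((1/2) *\<^sub>R poisson (ptil rho pr H gam j) (p2 rho pr H gam) (t, x, \<tau>, \<xi>)) *v a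
    = - (cmat (hamil (qq rho pr H gam j) (ppi rho pr H gam j) (t, x, \<tau>, \<xi>)) *v a)"
proof -
  let ?P = "cmat (ppi rho pr H gam j (t, x, \<tau>, \<xi>))"
  have "cmat ((1/2) *\<^sub>R poisson (ptil rho pr H gam j) (p2 rho pr H gam) (t, x, \<tau>, \<xi>)) *v (?P *v a)
      = - (cmat (hamil (qq rho pr H gam j) (ppi rho pr H gam j) (t, x, \<tau>, \<xi>)) *v (?P *v a))"
    unfolding matrix_vector_mul_assoc cmat_mult[symmetric] poisson_ptil_p2_mult_ppi[OF assms(1-9)]
    by (simp add: cmat_neg matrix_vector_mult_neg)
  then show ?thesis unfolding range .
qed

lemma transport_subprincipal_term:
  assumes g: "nondegenerate rho pr H gam z" and j: "j \<in> {1, 2, 3}" and qj: "qq rho pr H gam j z = 0"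
    and antisym: "\<And>i k. subprincipal rho pr H gam p1 z $ i $ k + subprincipal rho pr H gam p1 z $ k $ i = 0"
    and range: "cmat (ppi rho pr H gam j z) *v a = a"
  shows "(cmat (ptil rho pr H gam j z) ** subprincipal rho pr H gam p1 z) *v a = 0"
proof -
  let ?P = "cmat (ppi rho pr H gam j z)" and ?S = "subprincipal rho pr H gam p1 z"
  have "?P ** ?S ** ?P = 0"
    unfolding ppi_rank_one(1)[OF g j] by (rule cmat_tens_sandwich_antisymmetric[OF antisym])
  then have "(?P ** ?S) *v (?P *v a) = 0" by (simp add: matrix_vector_mul_assoc)
  then show ?thesis unfolding ptil_eq qj range by simp
qed

lemma Gam_char_root:
  assumes Gam_nbhd: "\<forall>j\<in>{1,2,3}. {z. admissible H z \<and> qq rho pr H gam j z = 0} \<subseteq> Gam j"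
    and Gam_disj: "\<forall>j\<in>{1,2,3}. \<forall>k\<in>{1,2,3}. j \<noteq> k \<longrightarrow> Gam j \<inter> Gam k = {}"
    and j: "j \<in> {1, 2, 3}" and z: "z \<in> Gam j" and adm: "admissible H z" and char: "z \<in> CharP rho pr H gam"
  shows "qq rho pr H gam j z = 0" and "\<forall>k\<in>{1,2,3} - {j}. qq rho pr H gam k z \<noteq> 0"
proof -
  have "k = j" if "k \<in> {1,2,3}" and "qq rho pr H gam k z = 0" for k
    using that Gam_nbhd Gam_disj j z adm by blast
  moreover from char obtain k where "k \<in> {1,2,3::nat}" "qq rho pr H gam k z = 0"
    unfolding CharP_def by auto
  ultimately show "qq rho pr H gam j z = 0" and "\<forall>k\<in>{1,2,3} - {j}. qq rho pr H gam k z \<noteq> 0" by auto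
qed

theorem proposition5p6:
  fixes rho pr :: "real^3 \<Rightarrow> real" and H :: "real^3 \<Rightarrow> real^3" and gam :: real
    and p1 p0 :: "pt \<Rightarrow> complex^3^3"
    and Gam :: "nat \<Rightarrow> pt set"
    and Lam :: "pt set" and a La :: "pt \<Rightarrow> complex^3"
  assumes smooth: "smooth_on UNIV rho" "smooth_on UNIV pr" "smooth_on UNIV H"
    and rho_pos: "\<forall>x. rho x > 0"
    and c_pos: "\<forall>x. csq rho pr gam x > 0"
    and H_cond: "\<forall>x. 0 < (norm (H x))\<^sup>2 \<and> (norm (H x))\<^sup>2 \<noteq> rho x * csq rho pr gam x"
    and equilibrium: "\<forall>x. grad3 pr x + cross3 (H x) (curl3 H x) = 0"
    and symbol: "\<forall>z. full_symbol rho pr H gam z = cmat (p2 rho pr H gam z) + p1 z + p0 z"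
    and homog: "\<forall>t x \<tau> \<xi> s. s > 0 \<longrightarrow>
        p1 (t, x, s * \<tau>, s *\<^sub>R \<xi>) = s *\<^sub>R p1 (t, x, \<tau>, \<xi>) \<and>
        p0 (t, x, s * \<tau>, s *\<^sub>R \<xi>) = p0 (t, x, \<tau>, \<xi>)"
    and Gam_open: "\<forall>j\<in>{1,2,3}. open (Gam j) \<and> conic_set (Gam j)"
    and Gam_nbhd: "\<forall>j\<in>{1,2,3}. {z. admissible H z \<and> qq rho pr H gam j z = 0} \<subseteq> Gam j"
    and Gam_disj: "\<forall>j\<in>{1,2,3}. \<forall>k\<in>{1,2,3}. j \<noteq> k \<longrightarrow> Gam j \<inter> Gam k = {}"
    and Lam_lag: "lagrangian_submanifold Lam" and Lam_conic: "conic_set Lam"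
    and Lam_char: "Lam \<subseteq> CharP rho pr H gam"
    and Lam_adm: "\<forall>z\<in>Lam. admissible H z"
    and kernel: "\<forall>z\<in>Lam. cmat (p2 rho pr H gam z) *v a z = 0"
  shows "\<forall>j\<in>{1,2,3}. \<forall>z\<in>Lam \<inter> Gam j.
           transportT rho pr H gam p1 j La a z
             = La z - cmat (hamil (qq rho pr H gam j) (ppi rho pr H gam j) z) *v a z"
proof (intro ballI)
  fix j z assume j: "j \<in> {1,2,3::nat}" and zG: "z \<in> Lam \<inter> Gam j"
  obtain t x \<tau> \<xi> where z: "z = (t, x, \<tau>, \<xi>)" by (cases z) auto
  note diff = smooth[THEN smooth_on_differentiable]
  have adm: "admissible H z" and char: "z \<in> CharP rho pr H gam" using zG Lam_adm Lam_char by auto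
  note root = Gam_char_root[OF Gam_nbhd Gam_disj j _ adm char]
  have qj: "qq rho pr H gam j z = 0" and qk: "\<forall>k\<in>{1,2,3} - {j}. qq rho pr H gam k z \<noteq> 0"
    using root zG by auto
  have g: "nondegenerate rho pr H gam z" by (rule nondegenerateI[OF rho_pos c_pos adm])
  have range: "cmat (ppi rho pr H gam j z) *v a z = a z"
    using kernel_p2_in_range_ppi[OF g j qj qk] kernel zG by blast
  have "\<And>i k. subprincipal rho pr H gam p1 z $ i $ k + subprincipal rho pr H gam p1 z $ k $ i = 0"
    unfolding z using equilibrium smooth(2,3)[THEN smooth_on_pd3_differentiable]
    by (intro subprincipal_antisymmetric[OF diff _ _ symbol homog]) auto
  note subprincipal_term = transport_subprincipal_term[OF g j qj this range]
  note bracket_term = transport_bracket_term[OF diff rho_pos c_pos adm[unfolded z] j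
      qj[unfolded z] qk[unfolded z] range[unfolded z]]
  show "transportT rho pr H gam p1 j La a z = La z - cmat (hamil (qq rho pr H gam j) (ppi rho pr H gam j) z) *v a z"
    using subprincipal_term bracket_term unfolding transportT_def z by simp
qed

end
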